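(* Let $N=(n_1,\dots,n_k)$ with $1\le n_1\le\cdots\le n_k$, and let $C$ be a nonsingular $|N|\times|N|$ complex matrix that is $N$-upper Toeplitz and $N$-Hermitian. Then there is a nonsingular $N$-upper Toeplitz matrix $S$ such that $S^{\maltese}CS=\varepsilon_1I_{n_1}\oplus\cdots\oplus\varepsilon_kI_{n_k}$ with each $\varepsilon_i\in\{-1,1\}$.
   Context: $|N|=n_1+\cdots+n_k$. An $|N|\times|N|$ matrix $C=[C_{ij}]_{i,j=1}^k$, partitioned so that $C_{ij}$ is $n_i\times n_j$, is $N$-upper Toeplitz if each block has the following form: if $i\le j$, $C_{ij}=[\,0\ \ T_{ij}\,]$ where $T_{ij}$ is an $n_i\times n_i$ upper triangular Toeplitz matrix preceded by an $n_i\times(n_j-n_i)$ zero block; if $i>j$, $C_{ij}=\begin{bmatrix}T_{ij}\\0\end{bmatrix}$ where $T_{ij}$ is an $n_j\times n_j$ upper triangular Toeplitz matrix with an $(n_i-n_j)\times n_j$ zero block below it. (Equivalently, $C$ commutes with $J_{n_1}(0)\oplus\cdots\oplus J_{n_k}(0)$.) Let $P_n$ be the $n\times n$ reversal matrix (ones on the antidiagonal, zeros elsewhere) and $P_N=P_{n_1}\oplus\cdots\oplus P_{n_k}$. For an $N$-upper Toeplitz $X$, its $N$-block star is $X^{\maltese}:=P_NX^*P_N$ (again $N$-upper Toeplitz), and $X$ is $N$-Hermitian if $X^{\maltese}=X$. *)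

theory Defs
  imports Complex_Main "Jordan_Normal_Form.Matrix"
begin

text \<open>A block structure N = (n_1,...,n_k) is a list of positive naturals.
  Blocks are indexed 0..k-1; block i occupies global rows/cols
  blk_off N i .. blk_off N i + N!i - 1.\<close>

definition blk_size :: "nat list \<Rightarrow> nat" where
  "blk_size N = sum_list N"

definition blk_off :: "nat list \<Rightarrow> nat \<Rightarrow> nat" where
  "blk_off N i = sum_list (take i N)"

text \<open>For i \<le> j, block C_ij = [0 T_ij] with T_ij an n_i x n_i upper triangular Toeplitz
  matrix preceded by an n_i x (n_j - n_i) zero block: entry (r,c) equals
  t(c - r - (n_j - n_i)) if c \<ge> r + (n_j - n_i), else 0.
  For i > j, C_ij = [T_ij; 0] with T_ij an n_j x n_j upper triangular Toeplitz matrix: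
  entry (r,c) equals t(c - r) if c \<ge> r, else 0 (rows r \<ge> n_j automatically give 0).\<close>

definition N_upper_toeplitz :: "nat list \<Rightarrow> complex mat \<Rightarrow> bool" where
  "N_upper_toeplitz N C \<longleftrightarrow>
     C \<in> carrier_mat (blk_size N) (blk_size N) \<and>
     (\<forall>i < length N. \<forall>j < length N. \<exists>t :: nat \<Rightarrow> complex.
        \<forall>r < N!i. \<forall>c < N!j.
          C $$ (blk_off N i + r, blk_off N j + c) =
            (if i \<le> j then
               (if r + (N!j - N!i) \<le> c then t (c - r - (N!j - N!i)) else 0)
             else
               (if r \<le> c then t (c - r) else 0)))"

definition conj_tr :: "complex mat \<Rightarrow> complex mat" where
  "conj_tr X = mat (dim_col X) (dim_row X) (\<lambda>(p,q). cnj (X $$ (q,p)))"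

text \<open>P_N = P_{n_1} \<oplus> ... \<oplus> P_{n_k}, with P_n the n x n reversal matrix.\<close>
definition P_N :: "nat list \<Rightarrow> complex mat" where
  "P_N N = mat (blk_size N) (blk_size N) (\<lambda>(p,q).
     if \<exists>i < length N. \<exists>r < N!i. \<exists>c < N!i.
          p = blk_off N i + r \<and> q = blk_off N i + c \<and> r + c = N!i - 1
     then 1 else 0)"

definition blk_star :: "nat list \<Rightarrow> complex mat \<Rightarrow> complex mat" where
  "blk_star N X = P_N N * conj_tr X * P_N N"

definition N_hermitian :: "nat list \<Rightarrow> complex mat \<Rightarrow> bool" where
  "N_hermitian N X \<longleftrightarrow> blk_star N X = X"

text \<open>eps_1 I_{n_1} \<oplus> ... \<oplus> eps_k I_{n_k} (eps indexed by block, 0-based).\<close>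
definition sign_blkdiag :: "nat list \<Rightarrow> (nat \<Rightarrow> complex) \<Rightarrow> complex mat" where
  "sign_blkdiag N eps = mat (blk_size N) (blk_size N) (\<lambda>(p,q).
     if p = q then (\<Sum>i < length N. if blk_off N i \<le> p \<and> p < blk_off N (Suc i) then eps i else 0)
     else 0)"

end

theory Submission
  imports Defs "HOL-Computational_Algebra.Formal_Power_Series"
begin

text \<open>
  \<open>N\<close>-upper Toeplitz matrices are exactly the matrices commuting with the nilpotent Jordan matrix
  \<open>J = J\<^sub>n\<^sub>1(0) \<oplus> \<dots> \<oplus> J\<^sub>n\<^sub>k(0)\<close>; they form an algebra closed under the block star, and the
  diagonal blocks of its elements are upper triangular Toeplitz matrices, i.e.\ truncated power series.
  A Hermitian invertible \<open>C\<close> of this algebra is diagonalised block by block through congruences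
  inside the algebra. Let \<open>k\<close> be a remaining block of maximal size. Invertibility of \<open>C\<close>
  forces a nonzero top entry \<open>c\<close> of the first column of block \<open>k\<close>, in a block \<open>l\<close> of the
  same size; if both top-left diagonal entries vanish, the congruence by \<open>1 + c F\<close>, where \<open>F\<close>
  copies block \<open>k\<close> into block \<open>l\<close>, makes the top-left entry of block \<open>k\<close> equal to \<open>2\<bar>c\<bar>\<^sup>2\<close>.
  Then the diagonal block \<open>T\<close> of \<open>C\<close> at \<open>k\<close> is an invertible Toeplitz matrix with real symbol
  \<open>g\<close>; the unipotent congruence \<open>1 - T\<^sup>-\<^sup>1 C Q\<close> (with \<open>Q\<close> the projection onto the other blocks)
  clears block row and column \<open>k\<close>, and \<open>\<sigma> + Q\<close>, where \<open>\<sigma>\<close> has as symbol a real square root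
  of \<open>\<plusminus>g\<^sup>-\<^sup>1\<close>, turns \<open>T\<close> into \<open>\<plusminus>I\<close>.
\<close>

section \<open>Block indexing and intertwining of shifts\<close>

fun blk_dec :: "nat list \<Rightarrow> nat \<Rightarrow> nat \<times> nat" where
  "blk_dec [] p = (0, p)"
| "blk_dec (a # ns) p = (if p < a then (0, p) else (case blk_dec ns (p - a) of (i, r) \<Rightarrow> (Suc i, r)))"

lemma blk_dec_correct:
  assumes "p < sum_list N"
  shows "fst (blk_dec N p) < length N \<and> snd (blk_dec N p) < N ! fst (blk_dec N p)
     \<and> sum_list (take (fst (blk_dec N p)) N) + snd (blk_dec N p) = p"
  using assms
proof (induction N arbitrary: p)
  case (Cons a ns)
  show ?case
  proof (cases "p < a")
    case False
    then have "p - a < sum_list ns" using Cons.prems by simp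
    from Cons.IH[OF this] False show ?thesis by (auto split: prod.splits)
  qed simp
qed simp

lemma blk_dec_sum_list_take:
  "i < length N \<Longrightarrow> r < N ! i \<Longrightarrow> blk_dec N (sum_list (take i N) + r) = (i, r)"
proof (induction N arbitrary: i)
  case (Cons a ns)
  then show ?case by (cases i) auto
qed simp

lemma sum_list_take_add_less:
  "i < length (N::nat list) \<Longrightarrow> r < N ! i \<Longrightarrow> sum_list (take i N) + r < sum_list N"
proof (induction N arbitrary: i)
  case (Cons a ns)
  then show ?case by (cases i) (auto simp: trans_less_add1)
qed simp

text \<open>\<open>intertwines_shift a b X\<close> says \<open>X J\<^sub>b = J\<^sub>a X\<close> for the \<open>a \<times> b\<close> matrix with entries \<open>X r c\<close>,
  \<open>J\<^sub>m\<close> being the nilpotent upper shift of size \<open>m\<close>.\<close>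

definition intertwines_shift :: "nat \<Rightarrow> nat \<Rightarrow> (nat \<Rightarrow> nat \<Rightarrow> 'a::zero) \<Rightarrow> bool" where
  "intertwines_shift a b X \<longleftrightarrow>
     (\<forall>r<a. \<forall>c<b. (if 0 < c then X r (c - 1) else 0) = (if r + 1 < a then X (r + 1) c else 0))"

lemma intertwines_shift_diag:
  "intertwines_shift a b X \<Longrightarrow> r + 1 < a \<Longrightarrow> c + 1 < b \<Longrightarrow> X r c = X (r + 1) (c + 1)"
  unfolding intertwines_shift_def by (drule spec[of _ r], auto dest: spec[of _ "c + 1"])

lemma intertwines_shift_last_row:
  "intertwines_shift a b X \<Longrightarrow> 0 < a \<Longrightarrow> c + 1 < b \<Longrightarrow> X (a - 1) c = 0"
  unfolding intertwines_shift_def by (drule spec[of _ "a - 1"], auto dest: spec[of _ "c + 1"])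

lemma intertwines_shift_first_col:
  "intertwines_shift a b X \<Longrightarrow> r + 1 < a \<Longrightarrow> 0 < b \<Longrightarrow> X (r + 1) 0 = 0"
  unfolding intertwines_shift_def by (drule spec[of _ r], auto dest: spec[of _ 0])

lemma intertwines_shift_toeplitz:
  assumes "intertwines_shift a b X"
  shows "r < a \<Longrightarrow> c < b \<Longrightarrow> r \<le> c \<Longrightarrow> X r c = X 0 (c - r)"
proof (induction r arbitrary: c)
  case (Suc r)
  have "X r (c - 1) = X (r + 1) (c - 1 + 1)"
    using intertwines_shift_diag[OF assms, of r "c - 1"] Suc.prems by auto
  moreover have "X r (c - 1) = X 0 (c - 1 - r)" using Suc by auto
  ultimately show ?case using Suc.prems by (simp add: Suc_diff_le)
qed simp

lemma intertwines_shift_zero_wide: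
  assumes "intertwines_shift a b X" "a \<le> b"
  shows "r < a \<Longrightarrow> c < b \<Longrightarrow> c < r + (b - a) \<Longrightarrow> X r c = 0"
proof (induction "a - 1 - r" arbitrary: r c)
  case 0
  then have "r = a - 1" by simp
  then show ?case using intertwines_shift_last_row[OF assms(1), of c] 0 assms(2) by auto
next
  case (Suc d)
  have "X r c = X (r + 1) (c + 1)"
    using intertwines_shift_diag[OF assms(1), of r c] Suc.prems Suc.hyps assms(2) by auto
  also have "\<dots> = 0" using Suc.hyps(1)[of "r + 1" "c + 1"] Suc.prems Suc.hyps(2) assms(2) by auto
  finally show ?case .
qed

lemma intertwines_shift_zero_tall:
  assumes "intertwines_shift a b X"
  shows "r < a \<Longrightarrow> c < b \<Longrightarrow> c < r \<Longrightarrow> X r c = 0"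
proof (induction c arbitrary: r)
  case 0
  then show ?case using intertwines_shift_first_col[OF assms, of "r - 1"] by auto
next
  case (Suc c)
  have "X (r - 1) c = X (r - 1 + 1) (c + 1)"
    using intertwines_shift_diag[OF assms, of "r - 1" c] Suc.prems by auto
  moreover have "X (r - 1) c = 0" using Suc by auto
  ultimately show ?case using Suc.prems by auto
qed

lemma intertwines_shift_iff_wide:
  assumes "a \<le> b"
  shows "intertwines_shift a b X \<longleftrightarrow>
    (\<exists>t. \<forall>r<a. \<forall>c<b. X r c = (if r + (b - a) \<le> c then t (c - r - (b - a)) else 0))"
proof
  assume h: "intertwines_shift a b X"
  show "\<exists>t. \<forall>r<a. \<forall>c<b. X r c = (if r + (b - a) \<le> c then t (c - r - (b - a)) else 0)"
  proof (intro exI allI impI)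
    fix r c assume rc: "r < a" "c < b"
    show "X r c = (if r + (b - a) \<le> c then X 0 (c - r - (b - a) + (b - a)) else 0)"
      using intertwines_shift_toeplitz[OF h rc] intertwines_shift_zero_wide[OF h assms rc] by auto
  qed
next
  assume "\<exists>t. \<forall>r<a. \<forall>c<b. X r c = (if r + (b - a) \<le> c then t (c - r - (b - a)) else 0)"
  then obtain t where "\<And>r c. r < a \<Longrightarrow> c < b \<Longrightarrow> X r c = (if r + (b - a) \<le> c then t (c - r - (b - a)) else 0)"
    by blast
  then show "intertwines_shift a b X"
    unfolding intertwines_shift_def using assms by (auto simp: diff_diff_add)
qed

lemma intertwines_shift_iff_tall:
  assumes "b \<le> a"
  shows "intertwines_shift a b X \<longleftrightarrow> (\<exists>t. \<forall>r<a. \<forall>c<b. X r c = (if r \<le> c then t (c - r) else 0))"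
proof
  assume h: "intertwines_shift a b X"
  show "\<exists>t. \<forall>r<a. \<forall>c<b. X r c = (if r \<le> c then t (c - r) else 0)"
  proof (intro exI allI impI)
    fix r c assume rc: "r < a" "c < b"
    show "X r c = (if r \<le> c then X 0 (c - r) else 0)"
      using intertwines_shift_toeplitz[OF h rc] intertwines_shift_zero_tall[OF h rc] by auto
  qed
next
  assume "\<exists>t. \<forall>r<a. \<forall>c<b. X r c = (if r \<le> c then t (c - r) else 0)"
  then obtain t where "\<And>r c. r < a \<Longrightarrow> c < b \<Longrightarrow> X r c = (if r \<le> c then t (c - r) else 0)"
    by blast
  then show "intertwines_shift a b X"
    unfolding intertwines_shift_def using assms by (auto simp: diff_diff_add)
qed

lemma mat_mult_entry:
  "A \<in> carrier_mat nr m \<Longrightarrow> B \<in> carrier_mat m nc \<Longrightarrow> i < nr \<Longrightarrow> j < nc \<Longrightarrow>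
   (A * B) $$ (i, j) = (\<Sum>s<m. A $$ (i, s) * B $$ (s, j))"
  by (simp add: scalar_prod_def atLeast0LessThan)

lemma conj_tr_carrier[simp]: "X \<in> carrier_mat a b \<Longrightarrow> conj_tr X \<in> carrier_mat b a"
  unfolding conj_tr_def carrier_mat_def by simp

lemma conj_tr_entry: "X \<in> carrier_mat a b \<Longrightarrow> p < b \<Longrightarrow> q < a \<Longrightarrow> conj_tr X $$ (p, q) = cnj (X $$ (q, p))"
  unfolding conj_tr_def carrier_mat_def by simp

lemma invertible_mat_iff_carrier:
  fixes A :: "'a::comm_ring_1 mat"
  assumes A: "A \<in> carrier_mat m m"
  shows "invertible_mat A \<longleftrightarrow> (\<exists>B \<in> carrier_mat m m. A * B = 1\<^sub>m m \<and> B * A = 1\<^sub>m m)"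
proof
  assume "invertible_mat A"
  then obtain B where B: "A * B = 1\<^sub>m m" "B * A = 1\<^sub>m (dim_row B)"
    using A unfolding invertible_mat_def inverts_mat_def by auto
  have "dim_col B = m" using arg_cong[OF B(1), of dim_col] by simp
  moreover have "dim_row B = m" using arg_cong[OF B(2), of dim_col] A by simp
  ultimately show "\<exists>B \<in> carrier_mat m m. A * B = 1\<^sub>m m \<and> B * A = 1\<^sub>m m" using B by auto
next
  assume "\<exists>B \<in> carrier_mat m m. A * B = 1\<^sub>m m \<and> B * A = 1\<^sub>m m"
  then show "invertible_mat A" using A unfolding invertible_mat_def inverts_mat_def by auto
qed

lemma invertible_mat_one: "invertible_mat (1\<^sub>m m :: 'a::comm_ring_1 mat)"
  unfolding invertible_mat_def inverts_mat_def by (auto intro!: exI[of _ "1\<^sub>m m"])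

lemma invertible_mat_mult:
  fixes A B :: "'a::comm_ring_1 mat"
  assumes A: "A \<in> carrier_mat m m" "invertible_mat A" and B: "B \<in> carrier_mat m m" "invertible_mat B"
  shows "invertible_mat (A * B)"
proof -
  obtain A' where A': "A' \<in> carrier_mat m m" "A * A' = 1\<^sub>m m" "A' * A = 1\<^sub>m m"
    using invertible_mat_iff_carrier[OF A(1)] A(2) by blast
  obtain B' where B': "B' \<in> carrier_mat m m" "B * B' = 1\<^sub>m m" "B' * B = 1\<^sub>m m"
    using invertible_mat_iff_carrier[OF B(1)] B(2) by blast
  have "A * B * (B' * A') = A * (B * (B' * A'))"
    using A B A' B' by (simp add: assoc_mult_mat[of _ m m _ m _ m])
  also have "B * (B' * A') = A'"
    using B B' A' by (simp add: assoc_mult_mat[of _ m m _ m _ m, symmetric])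
  finally have 1: "A * B * (B' * A') = 1\<^sub>m m" using A' by simp
  have "B' * A' * (A * B) = B' * (A' * (A * B))"
    using A B A' B' by (simp add: assoc_mult_mat[of _ m m _ m _ m])
  also have "A' * (A * B) = B"
    using A B A' by (simp add: assoc_mult_mat[of _ m m _ m _ m, symmetric])
  finally have 2: "B' * A' * (A * B) = 1\<^sub>m m" using B' by simp
  have "B' * A' \<in> carrier_mat m m" using A' B' by simp
  with 1 2 show ?thesis
    using invertible_mat_iff_carrier[OF mult_carrier_mat[OF A(1) B(1)]] by blast
qed

lemma invertible_one_plus_square_zero:
  fixes F :: "'a::comm_ring_1 mat"
  assumes F: "F \<in> carrier_mat m m" and FF: "F * F = 0\<^sub>m m m"
  shows "invertible_mat (1\<^sub>m m + a \<cdot>\<^sub>m F)"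
proof -
  have prod: "(1\<^sub>m m + a \<cdot>\<^sub>m F) * (1\<^sub>m m + b \<cdot>\<^sub>m F) = 1\<^sub>m m + (a + b) \<cdot>\<^sub>m F" for a b
  proof -
    have "(1\<^sub>m m + a \<cdot>\<^sub>m F) * (1\<^sub>m m + b \<cdot>\<^sub>m F)
        = 1\<^sub>m m * (1\<^sub>m m + b \<cdot>\<^sub>m F) + (a \<cdot>\<^sub>m F) * (1\<^sub>m m + b \<cdot>\<^sub>m F)"
      by (rule add_mult_distrib_mat) (use F in auto)
    also have "(a \<cdot>\<^sub>m F) * (1\<^sub>m m + b \<cdot>\<^sub>m F) = (a \<cdot>\<^sub>m F) * 1\<^sub>m m + (a \<cdot>\<^sub>m F) * (b \<cdot>\<^sub>m F)"
      by (rule mult_add_distrib_mat) (use F in auto)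
    also have "(a \<cdot>\<^sub>m F) * (b \<cdot>\<^sub>m F) = 0\<^sub>m m m"
      using F FF by (simp add: mult_smult_assoc_mat[of _ m m _ m] mult_smult_distrib[of _ m m _ m])
    finally show ?thesis using F by (auto intro!: eq_matI simp: algebra_simps)
  qed
  have "(1\<^sub>m m + a \<cdot>\<^sub>m F) * (1\<^sub>m m + (- a) \<cdot>\<^sub>m F) = 1\<^sub>m m"
    "(1\<^sub>m m + (- a) \<cdot>\<^sub>m F) * (1\<^sub>m m + a \<cdot>\<^sub>m F) = 1\<^sub>m m"
    using F by (auto simp: prod intro!: eq_matI)
  then show ?thesis using F by (subst invertible_mat_iff_carrier[of _ m]) auto
qed

section \<open>Power series\<close>

definition fps_cnj :: "complex fps \<Rightarrow> complex fps" where
  "fps_cnj s = Abs_fps (\<lambda>i. cnj (fps_nth s i))"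

lemma fps_cnj_nth[simp]: "fps_nth (fps_cnj s) i = cnj (fps_nth s i)"
  unfolding fps_cnj_def by simp

lemma sum_truncated_convolution:
  assumes "j < (m::nat)"
  shows "(\<Sum>c<m. (if i \<le> c then fps_nth s (c - i) else 0) * (if c \<le> j then fps_nth u (j - c) else 0))
       = (if i \<le> j then fps_nth (s * u) (j - i) else (0::'a::comm_ring_1))"
proof -
  have "(\<Sum>c<m. (if i \<le> c then fps_nth s (c - i) else 0) * (if c \<le> j then fps_nth u (j - c) else 0))
      = (\<Sum>c<m. if c \<in> {i..j} then fps_nth s (c - i) * fps_nth u (j - c) else 0)"
    by (rule sum.cong) auto
  also have "\<dots> = (\<Sum>c\<in>{..<m} \<inter> {i..j}. fps_nth s (c - i) * fps_nth u (j - c))"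
    by (rule sum.inter_restrict[symmetric]) simp
  also have "{..<m} \<inter> {i..j} = {i..j}" using assms by auto
  finally have restrict: "(\<Sum>c<m. (if i \<le> c then fps_nth s (c - i) else 0) * (if c \<le> j then fps_nth u (j - c) else 0))
      = (\<Sum>c\<in>{i..j}. fps_nth s (c - i) * fps_nth u (j - c))" .
  show ?thesis
  proof (cases "i \<le> j")
    case True
    have "(\<Sum>c\<in>{i..j}. fps_nth s (c - i) * fps_nth u (j - c)) = (\<Sum>d=0..j - i. fps_nth s d * fps_nth u (j - i - d))"
      using True by (intro sum.reindex_bij_witness[of _ "\<lambda>d. d + i" "\<lambda>c. c - i"]) auto
    then show ?thesis using True restrict by (simp add: fps_mult_nth)
  qed (use restrict in simp)
qed

definition fps_of_real :: "real fps \<Rightarrow> complex fps" where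
  "fps_of_real a = Abs_fps (\<lambda>i. complex_of_real (fps_nth a i))"

lemma fps_of_real_nth[simp]: "fps_nth (fps_of_real a) i = complex_of_real (fps_nth a i)"
  unfolding fps_of_real_def by simp

lemma fps_of_real_mult: "fps_of_real (a * b) = fps_of_real a * fps_of_real b"
  by (rule fps_ext) (simp add: fps_mult_nth)

lemma fps_of_real_const: "fps_of_real (fps_const c) = fps_const (complex_of_real c)"
  by (rule fps_ext) simp

lemma real_fps_congruent_sign:
  fixes g :: "real fps"
  assumes g0: "fps_nth g 0 \<noteq> 0"
  shows "\<exists>s \<epsilon>. (\<epsilon> = 1 \<or> \<epsilon> = -1) \<and> fps_nth s 0 \<noteq> 0 \<and> s * g * s = fps_const \<epsilon>"
proof -
  define \<epsilon> :: real where "\<epsilon> = (if fps_nth g 0 > 0 then 1 else -1)"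
  define h where "h = fps_const \<epsilon> * inverse g"
  have h0: "fps_nth h 0 > 0"
    unfolding h_def \<epsilon>_def using g0 by (auto simp: inverse_negative_iff_negative)
  define s where "s = fps_radical (\<lambda>k x. root k x) 2 h"
  have "root 2 (fps_nth h 0) ^ 2 = fps_nth h 0" using h0 by (simp add: real_root_pow_pos)
  then have sq: "s ^ 2 = h"
    unfolding s_def using power_radical[of h "\<lambda>k x. root k x" 1] h0 by (simp add: numeral_2_eq_2)
  have "s * g * s = s ^ 2 * g" by (simp add: power2_eq_square algebra_simps)
  also have "\<dots> = fps_const \<epsilon>" unfolding sq h_def by (simp add: mult.assoc inverse_mult_eq_1[OF g0])
  finally have "s * g * s = fps_const \<epsilon>" .
  moreover have "fps_nth s 0 \<noteq> 0" unfolding s_def using h0 by simp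
  moreover have "\<epsilon> = 1 \<or> \<epsilon> = -1" unfolding \<epsilon>_def by simp
  ultimately show ?thesis by blast
qed

lemma self_conjugate_fps_congruent_sign:
  fixes g :: "complex fps"
  assumes g: "fps_cnj g = g" and g0: "fps_nth g 0 \<noteq> 0"
  shows "\<exists>s \<epsilon>. fps_cnj s = s \<and> fps_nth s 0 \<noteq> 0 \<and> (\<epsilon> = 1 \<or> \<epsilon> = -1) \<and> s * g * s = fps_const \<epsilon>"
proof -
  define gr where "gr = Abs_fps (\<lambda>d. Re (fps_nth g d))"
  have "fps_nth g d \<in> \<real>" for d using arg_cong[OF g, of "\<lambda>s. fps_nth s d"] Reals_cnj_iff by force
  then have "fps_of_real gr = g" unfolding gr_def by (intro fps_ext) simp
  moreover from this have "fps_nth gr 0 \<noteq> 0" using g0 by (metis fps_of_real_nth of_real_0)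
  then obtain s \<epsilon> where "\<epsilon> = 1 \<or> \<epsilon> = -1" "fps_nth s 0 \<noteq> 0" "s * gr * s = fps_const \<epsilon>"
    using real_fps_congruent_sign by blast
  ultimately show ?thesis
    by (intro exI[of _ "fps_of_real s"] exI[of _ "complex_of_real \<epsilon>"])
      (auto simp: fps_of_real_mult[symmetric] fps_of_real_const intro!: fps_ext)
qed

lemma sum_two_point:
  fixes g :: "nat \<Rightarrow> 'a::comm_ring_1"
  assumes "a < m" "b < m" "a \<noteq> b"
  shows "(\<Sum>t<m. ((if t = a then 1 else 0) + x * (if t = b then 1 else 0)) * g t) = g a + x * g b"
proof -
  have "(\<Sum>t<m. ((if t = a then 1 else 0) + x * (if t = b then 1 else 0)) * g t)
      = (\<Sum>t<m. (if t = a then g a else 0) + (if t = b then x * g b else 0))"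
    using assms(3) by (intro sum.cong) auto
  also have "\<dots> = g a + x * g b" using assms by (simp add: sum.distrib)
  finally show ?thesis .
qed

section \<open>The algebra of \<open>N\<close>-upper Toeplitz matrices\<close>

locale blocks =
  fixes N :: "nat list"
  assumes blocks_pos: "\<And>i. i < length N \<Longrightarrow> 0 < N ! i"
begin

abbreviation n :: nat where "n \<equiv> blk_size N"

definition blk_idx :: "nat \<Rightarrow> nat" where "blk_idx p = fst (blk_dec N p)"
definition blk_pos :: "nat \<Rightarrow> nat" where "blk_pos p = snd (blk_dec N p)"

lemma blk_idx_less: "p < n \<Longrightarrow> blk_idx p < length N"
  and blk_pos_less: "p < n \<Longrightarrow> blk_pos p < N ! blk_idx p"
  and blk_off_idx_add_pos: "p < n \<Longrightarrow> blk_off N (blk_idx p) + blk_pos p = p"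
  using blk_dec_correct[of p N] unfolding blk_idx_def blk_pos_def blk_size_def blk_off_def by auto

lemma blk_idx_off_add[simp]: "i < length N \<Longrightarrow> r < N ! i \<Longrightarrow> blk_idx (blk_off N i + r) = i"
  and blk_pos_off_add[simp]: "i < length N \<Longrightarrow> r < N ! i \<Longrightarrow> blk_pos (blk_off N i + r) = r"
  using blk_dec_sum_list_take[of i N r] unfolding blk_idx_def blk_pos_def blk_off_def by auto

lemma blk_off_add_less[simp]: "i < length N \<Longrightarrow> r < N ! i \<Longrightarrow> blk_off N i + r < n"
  using sum_list_take_add_less[of i N r] unfolding blk_off_def blk_size_def by auto

lemma blk_off_less: "i < length N \<Longrightarrow> blk_off N i < n"
  and blk_idx_off[simp]: "i < length N \<Longrightarrow> blk_idx (blk_off N i) = i"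
  and blk_pos_off[simp]: "i < length N \<Longrightarrow> blk_pos (blk_off N i) = 0"
  using blk_off_add_less[of i 0] blk_idx_off_add[of i 0] blk_pos_off_add[of i 0] blocks_pos by auto

lemma index_eq_iff: "p < n \<Longrightarrow> q < n \<Longrightarrow> p = q \<longleftrightarrow> blk_idx p = blk_idx q \<and> blk_pos p = blk_pos q"
  by (metis blk_off_idx_add_pos)

lemma eq_blk_off_iff: "t < n \<Longrightarrow> l < length N \<Longrightarrow> t = blk_off N l \<longleftrightarrow> blk_idx t = l \<and> blk_pos t = 0"
  using blk_off_idx_add_pos[of t] by auto

lemma blk_pred:
  assumes "p < n" "0 < blk_pos p"
  shows "p - 1 < n \<and> blk_idx (p - 1) = blk_idx p \<and> blk_pos (p - 1) = blk_pos p - 1"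
proof -
  have e: "p - 1 = blk_off N (blk_idx p) + (blk_pos p - 1)" using blk_off_idx_add_pos[of p] assms by auto
  have i: "blk_idx p < length N" and l: "blk_pos p - 1 < N ! blk_idx p"
    using blk_idx_less[of p] blk_pos_less[of p] assms by auto
  show ?thesis unfolding e
    using blk_off_add_less[OF i l] blk_idx_off_add[OF i l] blk_pos_off_add[OF i l] by simp
qed

lemma blk_succ:
  assumes "p < n" "blk_pos p + 1 < N ! blk_idx p"
  shows "p + 1 < n \<and> blk_idx (p + 1) = blk_idx p \<and> blk_pos (p + 1) = blk_pos p + 1"
proof -
  have e: "p + 1 = blk_off N (blk_idx p) + (blk_pos p + 1)" using blk_off_idx_add_pos[of p] assms by auto
  show ?thesis unfolding e using blk_idx_less[of p] assms by (simp del: One_nat_def)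
qed

lemma sum_blk_supported:
  assumes k: "k < length N" and z: "\<And>t. t < n \<Longrightarrow> blk_idx t \<noteq> k \<Longrightarrow> g t = 0"
  shows "(\<Sum>t<n. g t) = (\<Sum>c<N ! k. g (blk_off N k + c))"
proof -
  have "(\<Sum>t<n. g t) = sum g ((\<lambda>c. blk_off N k + c) ` {..<N ! k})"
  proof (rule sum.mono_neutral_right)
    show "\<forall>t\<in>{..<n} - (\<lambda>c. blk_off N k + c) ` {..<N ! k}. g t = 0"
      using z blk_off_idx_add_pos blk_pos_less by (metis Diff_iff image_eqI lessThan_iff)
  qed (use k in auto)
  also have "\<dots> = (\<Sum>c<N ! k. g (blk_off N k + c))" by (subst sum.reindex) (auto simp: inj_on_def)
  finally show ?thesis .
qed

definition blk_rev :: "nat \<Rightarrow> nat" where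
  "blk_rev p = blk_off N (blk_idx p) + (N ! blk_idx p - 1 - blk_pos p)"

lemma
  assumes "p < n"
  shows blk_rev_less: "blk_rev p < n"
    and blk_idx_blk_rev[simp]: "blk_idx (blk_rev p) = blk_idx p"
    and blk_pos_blk_rev: "blk_pos (blk_rev p) = N ! blk_idx p - 1 - blk_pos p"
proof -
  have "N ! blk_idx p - 1 - blk_pos p < N ! blk_idx p" using blk_pos_less[OF assms] by auto
  then show "blk_rev p < n" "blk_idx (blk_rev p) = blk_idx p"
    "blk_pos (blk_rev p) = N ! blk_idx p - 1 - blk_pos p"
    unfolding blk_rev_def using blk_idx_less[OF assms] by (simp_all del: blk_off_add_less add: blk_off_add_less)
qed

lemma blk_rev_blk_rev[simp]: "p < n \<Longrightarrow> blk_rev (blk_rev p) = p"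
  using blk_rev_less[of p] blk_pos_blk_rev[of p] blk_pos_less[of p] blk_off_idx_add_pos[of p]
  by (simp add: blk_rev_def[of "blk_rev p"])

lemma blk_rev_eq_iff: "p < n \<Longrightarrow> q < n \<Longrightarrow> blk_rev p = blk_rev q \<longleftrightarrow> p = q"
  by (metis blk_rev_blk_rev)

lemma sum_blk_rev: "(\<Sum>s<n. g (blk_rev s)) = (\<Sum>s<n. g s)"
  by (rule sum.reindex_bij_witness[of _ blk_rev blk_rev]) (auto simp: blk_rev_less)

definition jordan_nil :: "complex mat" where
  "jordan_nil = mat n n (\<lambda>(p, q). if q = Suc p \<and> blk_idx q = blk_idx p then 1 else 0)"

lemma jordan_nil_carrier[simp]: "jordan_nil \<in> carrier_mat n n"
  unfolding jordan_nil_def by simp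

lemma jordan_nil_dim[simp]: "dim_row jordan_nil = n" "dim_col jordan_nil = n"
  unfolding jordan_nil_def by simp_all

lemma jordan_nil_entry:
  "p < n \<Longrightarrow> q < n \<Longrightarrow> jordan_nil $$ (p, q) = (if q = Suc p \<and> blk_idx q = blk_idx p then 1 else 0)"
  unfolding jordan_nil_def by simp

lemma mult_jordan_nil_entry:
  assumes X: "X \<in> carrier_mat n n" and pq: "p < n" "q < n"
  shows "(X * jordan_nil) $$ (p, q) = (if 0 < blk_pos q then X $$ (p, q - 1) else 0)"
proof -
  have "(X * jordan_nil) $$ (p, q) = (\<Sum>s<n. X $$ (p, s) * jordan_nil $$ (s, q))"
    using mat_mult_entry[OF X jordan_nil_carrier pq] .
  also have "\<dots> = (\<Sum>s<n. if s = q - 1 then (if 0 < blk_pos q then X $$ (p, s) else 0) else 0)"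
  proof (rule sum.cong)
    fix s assume "s \<in> {..<n}"
    then have "(q = Suc s \<and> blk_idx q = blk_idx s) \<longleftrightarrow> (0 < blk_pos q \<and> s = q - 1)"
      using blk_pred[OF pq(2)] blk_off_idx_add_pos[of s] blk_off_idx_add_pos[OF pq(2)] pq
      by (cases "blk_pos q") auto
    then show "X $$ (p, s) * jordan_nil $$ (s, q) = (if s = q - 1 then (if 0 < blk_pos q then X $$ (p, s) else 0) else 0)"
      using \<open>s \<in> {..<n}\<close> pq by (auto simp: jordan_nil_entry)
  qed simp
  finally show ?thesis using pq by simp
qed

lemma jordan_nil_mult_entry:
  assumes X: "X \<in> carrier_mat n n" and pq: "p < n" "q < n"
  shows "(jordan_nil * X) $$ (p, q) = (if blk_pos p + 1 < N ! blk_idx p then X $$ (p + 1, q) else 0)"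
proof -
  have "(jordan_nil * X) $$ (p, q) = (\<Sum>s<n. jordan_nil $$ (p, s) * X $$ (s, q))"
    using mat_mult_entry[OF jordan_nil_carrier X pq] .
  also have "\<dots> = (\<Sum>s<n. if s = p + 1 then (if blk_pos p + 1 < N ! blk_idx p then X $$ (s, q) else 0) else 0)"
  proof (rule sum.cong)
    fix s assume s: "s \<in> {..<n}"
    then have "(s = Suc p \<and> blk_idx s = blk_idx p) \<longleftrightarrow> (blk_pos p + 1 < N ! blk_idx p \<and> s = p + 1)"
      using blk_succ[OF pq(1)] blk_off_idx_add_pos[of s] blk_off_idx_add_pos[OF pq(1)] blk_pos_less[of s]
      by auto
    then show "jordan_nil $$ (p, s) * X $$ (s, q) =
        (if s = p + 1 then (if blk_pos p + 1 < N ! blk_idx p then X $$ (s, q) else 0) else 0)"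
      using s pq by (auto simp: jordan_nil_entry)
  qed simp
  finally show ?thesis using blk_succ[OF pq(1)] by auto
qed

definition centralizer :: "complex mat set" where
  "centralizer = {X \<in> carrier_mat n n. X * jordan_nil = jordan_nil * X}"

lemma centralizer_carrier: "X \<in> centralizer \<Longrightarrow> X \<in> carrier_mat n n"
  unfolding centralizer_def by simp

lemma centralizer_iff_entries:
  assumes X: "X \<in> carrier_mat n n"
  shows "X \<in> centralizer \<longleftrightarrow> (\<forall>p<n. \<forall>q<n.
    (if 0 < blk_pos q then X $$ (p, q - 1) else 0) =
    (if blk_pos p + 1 < N ! blk_idx p then X $$ (p + 1, q) else 0))"
proof -
  have "X * jordan_nil = jordan_nil * X \<longleftrightarrow> (\<forall>p<n. \<forall>q<n. (X * jordan_nil) $$ (p, q) = (jordan_nil * X) $$ (p, q))"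
  proof
    assume H: "\<forall>p<n. \<forall>q<n. (X * jordan_nil) $$ (p, q) = (jordan_nil * X) $$ (p, q)"
    show "X * jordan_nil = jordan_nil * X"
    proof (rule eq_matI)
      fix p q assume "p < dim_row (jordan_nil * X)" "q < dim_col (jordan_nil * X)"
      then have "p < n" "q < n" using X by auto
      then show "(X * jordan_nil) $$ (p, q) = (jordan_nil * X) $$ (p, q)" using H by blast
    qed (use X in auto)
  qed simp
  then show ?thesis
    unfolding centralizer_def using X mult_jordan_nil_entry[OF X] jordan_nil_mult_entry[OF X] by auto
qed

lemma centralizer_iff_blocks:
  assumes X: "X \<in> carrier_mat n n"
  shows "X \<in> centralizer \<longleftrightarrow> (\<forall>i<length N. \<forall>j<length N.
    intertwines_shift (N ! i) (N ! j) (\<lambda>r c. X $$ (blk_off N i + r, blk_off N j + c)))"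
  unfolding centralizer_iff_entries[OF X]
proof (intro iffI allI impI)
  fix i j assume H: "\<forall>p<n. \<forall>q<n. (if 0 < blk_pos q then X $$ (p, q - 1) else 0) =
      (if blk_pos p + 1 < N ! blk_idx p then X $$ (p + 1, q) else 0)"
    and ij: "i < length N" "j < length N"
  show "intertwines_shift (N ! i) (N ! j) (\<lambda>r c. X $$ (blk_off N i + r, blk_off N j + c))"
    unfolding intertwines_shift_def
  proof (intro allI impI)
    fix r c assume rc: "r < N ! i" "c < N ! j"
    have "0 < c \<Longrightarrow> blk_off N j + c - 1 = blk_off N j + (c - 1)" by simp
    then show "(if 0 < c then X $$ (blk_off N i + r, blk_off N j + (c - 1)) else 0) =
        (if r + 1 < N ! i then X $$ (blk_off N i + (r + 1), blk_off N j + c) else 0)"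
      using H[rule_format, of "blk_off N i + r" "blk_off N j + c"] ij rc by (auto simp: add.assoc)
  qed
next
  fix p q assume H: "\<forall>i<length N. \<forall>j<length N.
      intertwines_shift (N ! i) (N ! j) (\<lambda>r c. X $$ (blk_off N i + r, blk_off N j + c))"
    and pq: "p < n" "q < n"
  note e = blk_off_idx_add_pos[OF pq(1)] blk_off_idx_add_pos[OF pq(2)]
  have "0 < blk_pos q \<Longrightarrow> blk_off N (blk_idx q) + (blk_pos q - 1) = q - 1" using e by auto
  moreover have "blk_off N (blk_idx p) + (blk_pos p + 1) = p + 1" using e by auto
  ultimately show "(if 0 < blk_pos q then X $$ (p, q - 1) else 0) =
      (if blk_pos p + 1 < N ! blk_idx p then X $$ (p + 1, q) else 0)"
    using H[rule_format, OF blk_idx_less[OF pq(1)] blk_idx_less[OF pq(2)], unfolded intertwines_shift_def,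
        rule_format, OF blk_pos_less[OF pq(1)] blk_pos_less[OF pq(2)]] e by auto
qed

lemma centralizer_block:
  "X \<in> centralizer \<Longrightarrow> i < length N \<Longrightarrow> j < length N \<Longrightarrow>
   intertwines_shift (N ! i) (N ! j) (\<lambda>r c. X $$ (blk_off N i + r, blk_off N j + c))"
  using centralizer_iff_blocks centralizer_carrier by blast

lemma N_upper_toeplitz_iff_centralizer:
  assumes "sorted N"
  shows "N_upper_toeplitz N X \<longleftrightarrow> X \<in> centralizer"
proof -
  have "(\<exists>t. \<forall>r < N ! i. \<forall>c < N ! j. X $$ (blk_off N i + r, blk_off N j + c) =
            (if i \<le> j then (if r + (N ! j - N ! i) \<le> c then t (c - r - (N ! j - N ! i)) else 0)
             else (if r \<le> c then t (c - r) else 0)))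
      \<longleftrightarrow> intertwines_shift (N ! i) (N ! j) (\<lambda>r c. X $$ (blk_off N i + r, blk_off N j + c))"
    if "i < length N" "j < length N" for i j
  proof (cases "i \<le> j")
    case True
    then show ?thesis
      using intertwines_shift_iff_wide[of "N ! i" "N ! j" "\<lambda>r c. X $$ (blk_off N i + r, blk_off N j + c)"]
        sorted_nth_mono[OF assms True] that
      by simp
  next
    case False
    then show ?thesis
      using intertwines_shift_iff_tall[of "N ! j" "N ! i" "\<lambda>r c. X $$ (blk_off N i + r, blk_off N j + c)"]
        sorted_nth_mono[OF assms, of j i] that
      by simp
  qed
  then show ?thesis
    unfolding N_upper_toeplitz_def using centralizer_iff_blocks[of X] centralizer_carrier[of X] by auto
qed

lemmas mult_carrier_sq[simp] = mult_carrier_mat[of _ n n _ n]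
lemmas mult_one_sq[simp] = left_mult_one_mat[of _ n n] right_mult_one_mat[of _ n n]
lemmas mult_zero_sq[simp] = left_mult_zero_mat[of _ n n] right_mult_zero_mat[of _ n n]
lemmas mult_assoc_sq = assoc_mult_mat[of _ n n _ n _ n]
lemmas mult_add_distrib_sq = mult_add_distrib_mat[of _ n n _ n]
lemmas add_mult_distrib_sq = add_mult_distrib_mat[of _ n n _ _ n]
lemmas mult_smult_assoc_sq = mult_smult_assoc_mat[of _ n n _ n]
lemmas mult_smult_distrib_sq = mult_smult_distrib[of _ n n _ n]

section \<open>The block star\<close>

abbreviation star :: "complex mat \<Rightarrow> complex mat" where "star \<equiv> blk_star N"

lemma P_N_carrier[simp]: "P_N N \<in> carrier_mat n n"
  unfolding P_N_def by simp

lemma P_N_entry: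
  assumes pq: "p < n" "q < n"
  shows "P_N N $$ (p, q) = (if q = blk_rev p then 1 else 0)"
proof -
  have "(\<exists>i < length N. \<exists>r < N ! i. \<exists>c < N ! i.
          p = blk_off N i + r \<and> q = blk_off N i + c \<and> r + c = N ! i - 1) \<longleftrightarrow> q = blk_rev p"
  proof
    assume "\<exists>i < length N. \<exists>r < N ! i. \<exists>c < N ! i.
      p = blk_off N i + r \<and> q = blk_off N i + c \<and> r + c = N ! i - 1"
    then obtain i r c where "i < length N" "r < N ! i" "p = blk_off N i + r" "q = blk_off N i + c"
      "r + c = N ! i - 1"
      by blast
    then show "q = blk_rev p" unfolding blk_rev_def by auto
  next
    assume q: "q = blk_rev p"
    have "blk_idx p < length N" "blk_pos p < N ! blk_idx p" "N ! blk_idx p - 1 - blk_pos p < N ! blk_idx p"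
      "p = blk_off N (blk_idx p) + blk_pos p" "q = blk_off N (blk_idx p) + (N ! blk_idx p - 1 - blk_pos p)"
      "blk_pos p + (N ! blk_idx p - 1 - blk_pos p) = N ! blk_idx p - 1"
      using blk_idx_less[OF pq(1)] blk_pos_less[OF pq(1)] blk_off_idx_add_pos[OF pq(1)] q
      unfolding blk_rev_def by auto
    then show "\<exists>i < length N. \<exists>r < N ! i. \<exists>c < N ! i.
        p = blk_off N i + r \<and> q = blk_off N i + c \<and> r + c = N ! i - 1"
      by blast
  qed
  then show ?thesis unfolding P_N_def using pq by simp
qed

lemma P_N_dim[simp]: "dim_row (P_N N) = n" "dim_col (P_N N) = n"
  unfolding P_N_def by simp_all

lemma blk_star_carrier[simp]: "star X \<in> carrier_mat n n"
  unfolding blk_star_def carrier_mat_def by simp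

lemma blk_star_dim[simp]: "dim_row (star X) = n" "dim_col (star X) = n"
  unfolding blk_star_def by simp_all

lemma P_N_mult_entry:
  assumes Y: "Y \<in> carrier_mat n n" and pt: "p < n" "t < n"
  shows "(P_N N * Y) $$ (p, t) = Y $$ (blk_rev p, t)"
proof -
  have "(P_N N * Y) $$ (p, t) = (\<Sum>s<n. P_N N $$ (p, s) * Y $$ (s, t))"
    by (rule mat_mult_entry[OF P_N_carrier Y pt])
  also have "\<dots> = (\<Sum>s<n. if s = blk_rev p then Y $$ (s, t) else 0)"
    by (rule sum.cong) (auto simp: P_N_entry pt)
  finally show ?thesis using blk_rev_less[OF pt(1)] by simp
qed

lemma mult_P_N_entry:
  assumes Y: "Y \<in> carrier_mat n n" and tq: "t < n" "q < n"
  shows "(Y * P_N N) $$ (t, q) = Y $$ (t, blk_rev q)"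
proof -
  have "(Y * P_N N) $$ (t, q) = (\<Sum>s<n. Y $$ (t, s) * P_N N $$ (s, q))"
    by (rule mat_mult_entry[OF Y P_N_carrier tq])
  also have "\<dots> = (\<Sum>s<n. if s = blk_rev q then Y $$ (t, s) else 0)"
    by (rule sum.cong) (use tq blk_rev_eq_iff blk_rev_blk_rev in \<open>auto simp: P_N_entry\<close>)
  finally show ?thesis using blk_rev_less[OF tq(2)] by simp
qed

lemma blk_star_entry:
  assumes X: "X \<in> carrier_mat n n" and pq: "p < n" "q < n"
  shows "star X $$ (p, q) = cnj (X $$ (blk_rev q, blk_rev p))"
proof -
  have "P_N N * conj_tr X \<in> carrier_mat n n" using X by simp
  then have "star X $$ (p, q) = (P_N N * conj_tr X) $$ (p, blk_rev q)"
    unfolding blk_star_def using mult_P_N_entry pq by blast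
  also have "\<dots> = conj_tr X $$ (blk_rev p, blk_rev q)"
    using P_N_mult_entry[of "conj_tr X"] X pq blk_rev_less by simp
  finally show ?thesis using conj_tr_entry[OF X] blk_rev_less pq by simp
qed

lemma blk_star_blk_star[simp]: "X \<in> carrier_mat n n \<Longrightarrow> star (star X) = X"
  by (rule eq_matI) (auto simp: blk_star_entry blk_rev_less)

lemma blk_star_mult:
  assumes X: "X \<in> carrier_mat n n" and Y: "Y \<in> carrier_mat n n"
  shows "star (X * Y) = star Y * star X"
proof (rule eq_matI)
  fix p q assume "p < dim_row (star Y * star X)" "q < dim_col (star Y * star X)"
  then have pq: "p < n" "q < n" by auto
  have "star (X * Y) $$ (p, q) = (\<Sum>s<n. cnj (Y $$ (s, blk_rev p)) * cnj (X $$ (blk_rev q, s)))"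
    using blk_star_entry[of "X * Y"] mat_mult_entry[OF X Y] X Y pq blk_rev_less
    by (simp add: mult.commute)
  also have "\<dots> = (\<Sum>s<n. cnj (Y $$ (blk_rev s, blk_rev p)) * cnj (X $$ (blk_rev q, blk_rev s)))"
    by (rule sum_blk_rev[symmetric])
  also have "\<dots> = (star Y * star X) $$ (p, q)"
    using mat_mult_entry[OF blk_star_carrier blk_star_carrier pq] pq
    by (auto simp: blk_star_entry X Y intro!: sum.cong)
  finally show "star (X * Y) $$ (p, q) = (star Y * star X) $$ (p, q)" .
qed auto

lemma blk_star_add:
  "X \<in> carrier_mat n n \<Longrightarrow> Y \<in> carrier_mat n n \<Longrightarrow> star (X + Y) = star X + star Y"
  by (rule eq_matI) (auto simp: blk_star_entry blk_rev_less)

lemma blk_star_smult: "X \<in> carrier_mat n n \<Longrightarrow> star (a \<cdot>\<^sub>m X) = cnj a \<cdot>\<^sub>m star X"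
  by (rule eq_matI) (auto simp: blk_star_entry blk_rev_less)

lemma blk_star_one[simp]: "star (1\<^sub>m n) = 1\<^sub>m n"
  by (rule eq_matI) (auto simp: blk_star_entry blk_rev_less blk_rev_eq_iff)

lemma blk_star_zero[simp]: "star (0\<^sub>m n n) = 0\<^sub>m n n"
  by (rule eq_matI) (auto simp: blk_star_entry blk_rev_less)

lemma blk_star_congruence:
  "X \<in> carrier_mat n n \<Longrightarrow> Y \<in> carrier_mat n n \<Longrightarrow> C \<in> carrier_mat n n \<Longrightarrow>
   star (X * Y) * C * (X * Y) = star Y * (star X * C * X) * Y"
  by (simp add: blk_star_mult mult_assoc_sq)

lemma invertible_blk_star:
  assumes X: "X \<in> carrier_mat n n" "invertible_mat X"
  shows "invertible_mat (star X)"
proof -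
  obtain U where U: "U \<in> carrier_mat n n" "X * U = 1\<^sub>m n" "U * X = 1\<^sub>m n"
    using invertible_mat_iff_carrier[OF X(1)] X(2) by blast
  have 1: "star X * star U = 1\<^sub>m n"
    using blk_star_mult[OF U(1) X(1)] U(3) by simp
  have 2: "star U * star X = 1\<^sub>m n"
    using blk_star_mult[OF X(1) U(1)] U(2) by simp
  show ?thesis
    unfolding invertible_mat_iff_carrier[OF blk_star_carrier] using 1 2 blk_star_carrier by blast
qed

lemma blk_star_jordan_nil: "star jordan_nil = jordan_nil"
proof (rule eq_matI)
  fix p q assume "p < dim_row jordan_nil" "q < dim_col jordan_nil"
  then have pq: "p < n" "q < n" by auto
  have "(blk_rev p = Suc (blk_rev q) \<and> blk_idx p = blk_idx q) \<longleftrightarrow> (q = Suc p \<and> blk_idx q = blk_idx p)"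
    using blk_off_idx_add_pos[OF pq(1)] blk_off_idx_add_pos[OF pq(2)] blk_pos_less[OF pq(1)]
      blk_pos_less[OF pq(2)] index_eq_iff[OF pq] unfolding blk_rev_def by auto
  then show "star jordan_nil $$ (p, q) = jordan_nil $$ (p, q)"
    using pq blk_rev_less by (simp add: blk_star_entry jordan_nil_entry)
qed auto

lemma centralizer_mult:
  assumes "X \<in> centralizer" "Y \<in> centralizer"
  shows "X * Y \<in> centralizer"
proof -
  have X: "X \<in> carrier_mat n n" "X * jordan_nil = jordan_nil * X"
    and Y: "Y \<in> carrier_mat n n" "Y * jordan_nil = jordan_nil * Y"
    using assms unfolding centralizer_def by auto
  have "X * Y * jordan_nil = X * (jordan_nil * Y)" using X Y by (simp add: mult_assoc_sq)
  also have "\<dots> = X * jordan_nil * Y" by (rule mult_assoc_sq[symmetric]) (use X Y in simp_all)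
  also have "\<dots> = jordan_nil * X * Y" using X by simp
  also have "\<dots> = jordan_nil * (X * Y)" using X Y by (simp add: mult_assoc_sq)
  finally show ?thesis unfolding centralizer_def using X Y by simp
qed

lemma centralizer_add: "X \<in> centralizer \<Longrightarrow> Y \<in> centralizer \<Longrightarrow> X + Y \<in> centralizer"
  unfolding centralizer_def by (simp add: add_mult_distrib_sq mult_add_distrib_sq)

lemma centralizer_smult: "X \<in> centralizer \<Longrightarrow> a \<cdot>\<^sub>m X \<in> centralizer"
  unfolding centralizer_def by (simp add: mult_smult_assoc_sq mult_smult_distrib_sq)

lemma one_mem_centralizer: "1\<^sub>m n \<in> centralizer"
  unfolding centralizer_def by simp

lemma centralizer_blk_star: "X \<in> centralizer \<Longrightarrow> star X \<in> centralizer"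
  unfolding centralizer_def
  using blk_star_mult[of X jordan_nil] blk_star_mult[of jordan_nil X] blk_star_jordan_nil by auto

section \<open>Block scalar matrices\<close>

lemma sign_blkdiag_carrier[simp]: "sign_blkdiag N f \<in> carrier_mat n n"
  unfolding sign_blkdiag_def by simp

lemma sign_blkdiag_dim[simp]: "dim_row (sign_blkdiag N f) = n" "dim_col (sign_blkdiag N f) = n"
  unfolding sign_blkdiag_def by simp_all

lemma sign_blkdiag_entry:
  assumes pq: "p < n" "q < n"
  shows "sign_blkdiag N f $$ (p, q) = (if p = q then f (blk_idx p) else 0)"
proof -
  have "(if blk_off N i \<le> p \<and> p < blk_off N (Suc i) then f i else 0) = (if i = blk_idx p then f i else 0)"
    if i: "i < length N" for i
  proof -
    have "blk_off N (Suc i) = blk_off N i + N ! i"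
      unfolding blk_off_def using i by (simp add: take_Suc_conv_app_nth)
    moreover have "blk_off N i \<le> p \<and> p < blk_off N i + N ! i \<longleftrightarrow> i = blk_idx p"
      using blk_idx_off_add[OF i, of "p - blk_off N i"] blk_off_idx_add_pos[OF pq(1)] blk_pos_less[OF pq(1)]
      by (auto simp: le_add_diff_inverse)
    ultimately show ?thesis by simp
  qed
  then have sum: "(\<Sum>i < length N. if blk_off N i \<le> p \<and> p < blk_off N (Suc i) then f i else 0) = f (blk_idx p)"
    using blk_idx_less[OF pq(1)] by simp
  have "sign_blkdiag N f $$ (p, q) =
      (if p = q then (\<Sum>i < length N. if blk_off N i \<le> p \<and> p < blk_off N (Suc i) then f i else 0) else 0)"
    unfolding sign_blkdiag_def using pq by simp
  also have "\<dots> = (if p = q then f (blk_idx p) else 0)" by (simp only: sum)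
  finally show ?thesis .
qed

lemma sign_blkdiag_mult_entry:
  assumes X: "X \<in> carrier_mat n n" and pq: "p < n" "q < n"
  shows "(sign_blkdiag N f * X) $$ (p, q) = f (blk_idx p) * X $$ (p, q)"
proof -
  have "(sign_blkdiag N f * X) $$ (p, q) = (\<Sum>s<n. sign_blkdiag N f $$ (p, s) * X $$ (s, q))"
    by (rule mat_mult_entry[OF sign_blkdiag_carrier X pq])
  also have "\<dots> = (\<Sum>s<n. if s = p then f (blk_idx p) * X $$ (s, q) else 0)"
    by (rule sum.cong) (auto simp: sign_blkdiag_entry pq)
  finally show ?thesis using pq by simp
qed

lemma mult_sign_blkdiag_entry:
  assumes X: "X \<in> carrier_mat n n" and pq: "p < n" "q < n"
  shows "(X * sign_blkdiag N f) $$ (p, q) = X $$ (p, q) * f (blk_idx q)"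
proof -
  have "(X * sign_blkdiag N f) $$ (p, q) = (\<Sum>s<n. X $$ (p, s) * sign_blkdiag N f $$ (s, q))"
    by (rule mat_mult_entry[OF X sign_blkdiag_carrier pq])
  also have "\<dots> = (\<Sum>s<n. if s = q then X $$ (p, s) * f (blk_idx q) else 0)"
    by (rule sum.cong) (auto simp: sign_blkdiag_entry pq)
  finally show ?thesis using pq by simp
qed

lemma sign_blkdiag_mult: "sign_blkdiag N f * sign_blkdiag N g = sign_blkdiag N (\<lambda>i. f i * g i)"
proof (rule eq_matI)
  fix p q assume "p < dim_row (sign_blkdiag N (\<lambda>i. f i * g i))" "q < dim_col (sign_blkdiag N (\<lambda>i. f i * g i))"
  then have pq: "p < n" "q < n" by auto
  show "(sign_blkdiag N f * sign_blkdiag N g) $$ (p, q) = sign_blkdiag N (\<lambda>i. f i * g i) $$ (p, q)"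
    using sign_blkdiag_mult_entry[OF sign_blkdiag_carrier pq] by (simp add: sign_blkdiag_entry pq)
qed auto

lemma sign_blkdiag_add: "sign_blkdiag N f + sign_blkdiag N g = sign_blkdiag N (\<lambda>i. f i + g i)"
  by (rule eq_matI) (auto simp: sign_blkdiag_entry)

lemma sign_blkdiag_one: "sign_blkdiag N (\<lambda>i. 1) = 1\<^sub>m n"
  by (rule eq_matI) (auto simp: sign_blkdiag_entry)

lemma sign_blkdiag_zero: "sign_blkdiag N (\<lambda>i. 0) = 0\<^sub>m n n"
  by (rule eq_matI) (auto simp: sign_blkdiag_entry)

lemma blk_star_sign_blkdiag: "star (sign_blkdiag N f) = sign_blkdiag N (\<lambda>i. cnj (f i))"
  by (rule eq_matI) (auto simp: blk_star_entry sign_blkdiag_entry blk_rev_less blk_rev_eq_iff)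

lemma sign_blkdiag_mem_centralizer: "sign_blkdiag N f \<in> centralizer"
  unfolding centralizer_def
proof (intro CollectI conjI sign_blkdiag_carrier eq_matI)
  fix p q assume "p < dim_row (jordan_nil * sign_blkdiag N f)" "q < dim_col (jordan_nil * sign_blkdiag N f)"
  then have pq: "p < n" "q < n" by auto
  show "(sign_blkdiag N f * jordan_nil) $$ (p, q) = (jordan_nil * sign_blkdiag N f) $$ (p, q)"
    using sign_blkdiag_mult_entry[OF jordan_nil_carrier pq] mult_sign_blkdiag_entry[OF jordan_nil_carrier pq]
    by (auto simp: jordan_nil_entry pq)
qed auto

definition blk_proj :: "nat \<Rightarrow> complex mat" where
  "blk_proj k = sign_blkdiag N (\<lambda>i. if i = k then 1 else 0)"

definition blk_coproj :: "nat \<Rightarrow> complex mat" where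
  "blk_coproj k = sign_blkdiag N (\<lambda>i. if i = k then 0 else 1)"

lemma blk_proj_carrier[simp]: "blk_proj k \<in> carrier_mat n n" "blk_coproj k \<in> carrier_mat n n"
  unfolding blk_proj_def blk_coproj_def by simp_all

lemma blk_proj_algebra:
  "blk_proj k * blk_proj k = blk_proj k" "blk_coproj k * blk_coproj k = blk_coproj k"
  "blk_proj k * blk_coproj k = 0\<^sub>m n n" "blk_coproj k * blk_proj k = 0\<^sub>m n n"
  "blk_proj k + blk_coproj k = 1\<^sub>m n" "star (blk_proj k) = blk_proj k" "star (blk_coproj k) = blk_coproj k"
  unfolding blk_proj_def blk_coproj_def
  by (simp_all add: sign_blkdiag_mult sign_blkdiag_add blk_star_sign_blkdiag sign_blkdiag_zero
      sign_blkdiag_one[symmetric] if_distrib cong: if_cong)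

lemma blk_proj_mult_entries:
  assumes X: "X \<in> carrier_mat n n" and pq: "p < n" "q < n"
  shows "(blk_proj k * X * blk_proj k) $$ (p, q) = (if blk_idx p = k \<and> blk_idx q = k then X $$ (p, q) else 0)"
    and "(blk_proj k * X * blk_coproj k) $$ (p, q) = (if blk_idx p = k \<and> blk_idx q \<noteq> k then X $$ (p, q) else 0)"
    and "(blk_coproj k * X * blk_proj k) $$ (p, q) = (if blk_idx p \<noteq> k \<and> blk_idx q = k then X $$ (p, q) else 0)"
  unfolding blk_proj_def blk_coproj_def
  using mult_sign_blkdiag_entry[OF mult_carrier_sq[OF sign_blkdiag_carrier X] pq] sign_blkdiag_mult_entry[OF X pq]
  by simp_all

definition scalar_outside :: "nat set \<Rightarrow> (nat \<Rightarrow> complex) \<Rightarrow> complex mat \<Rightarrow> bool" where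
  "scalar_outside B f X \<longleftrightarrow> (\<forall>p<n. \<forall>q<n. \<not> (blk_idx p \<in> B \<and> blk_idx q \<in> B) \<longrightarrow>
     X $$ (p, q) = (if p = q then f (blk_idx p) else 0))"

lemma scalar_outside_cong: "scalar_outside B f X \<Longrightarrow> (\<And>i. i \<notin> B \<Longrightarrow> f i = g i) \<Longrightarrow> scalar_outside B g X"
  unfolding scalar_outside_def by auto

lemma scalar_outside_mult:
  assumes X: "X \<in> carrier_mat n n" "scalar_outside B f X" and Y: "Y \<in> carrier_mat n n" "scalar_outside B g Y"
  shows "scalar_outside B (\<lambda>i. f i * g i) (X * Y)"
  unfolding scalar_outside_def
proof (intro allI impI)
  fix p q assume pq: "p < n" "q < n" and out: "\<not> (blk_idx p \<in> B \<and> blk_idx q \<in> B)"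
  have "(X * Y) $$ (p, q) = (\<Sum>s<n. X $$ (p, s) * Y $$ (s, q))" by (rule mat_mult_entry[OF X(1) Y(1) pq])
  also have "\<dots> = (if p = q then f (blk_idx p) * g (blk_idx p) else 0)"
  proof (cases "blk_idx q \<in> B")
    case False
    have "(\<Sum>s<n. X $$ (p, s) * Y $$ (s, q)) = (\<Sum>s<n. if s = q then X $$ (p, s) * g (blk_idx q) else 0)"
      by (rule sum.cong) (use Y(2) False pq in \<open>auto simp: scalar_outside_def\<close>)
    then show ?thesis using X(2) False pq unfolding scalar_outside_def by auto
  next
    case True
    then have "blk_idx p \<notin> B" using out by auto
    then have "(\<Sum>s<n. X $$ (p, s) * Y $$ (s, q)) = (\<Sum>s<n. if s = p then f (blk_idx p) * Y $$ (s, q) else 0)"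
      by (intro sum.cong) (use X(2) pq in \<open>auto simp: scalar_outside_def\<close>)
    then show ?thesis using Y(2) \<open>blk_idx p \<notin> B\<close> pq unfolding scalar_outside_def by auto
  qed
  finally show "(X * Y) $$ (p, q) = (if p = q then f (blk_idx p) * g (blk_idx p) else 0)" .
qed

lemma scalar_outside_add:
  "X \<in> carrier_mat n n \<Longrightarrow> Y \<in> carrier_mat n n \<Longrightarrow> scalar_outside B f X \<Longrightarrow> scalar_outside B g Y \<Longrightarrow>
   scalar_outside B (\<lambda>i. f i + g i) (X + Y)"
  unfolding scalar_outside_def by auto

lemma scalar_outside_smult:
  "X \<in> carrier_mat n n \<Longrightarrow> scalar_outside B f X \<Longrightarrow> scalar_outside B (\<lambda>i. a * f i) (a \<cdot>\<^sub>m X)"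
  unfolding scalar_outside_def by auto

lemma scalar_outside_sign_blkdiag: "scalar_outside B f (sign_blkdiag N f)"
  unfolding scalar_outside_def by (auto simp: sign_blkdiag_entry)

lemma scalar_outside_one: "scalar_outside B (\<lambda>i. 1) (1\<^sub>m n)"
  unfolding scalar_outside_def by auto

lemma scalar_outside_all_blocks: "scalar_outside {..<length N} f X"
  unfolding scalar_outside_def using blk_idx_less by auto

lemma scalar_outside_empty: "X \<in> carrier_mat n n \<Longrightarrow> scalar_outside {} f X \<Longrightarrow> X = sign_blkdiag N f"
  by (rule eq_matI) (auto simp: scalar_outside_def sign_blkdiag_entry)

lemma scalar_outside_blk_star:
  assumes X: "X \<in> carrier_mat n n" "scalar_outside B f X"
  shows "scalar_outside B (\<lambda>i. cnj (f i)) (star X)"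
  unfolding scalar_outside_def
proof (intro allI impI)
  fix p q assume pq: "p < n" "q < n" and out: "\<not> (blk_idx p \<in> B \<and> blk_idx q \<in> B)"
  have r: "blk_rev q < n" "blk_rev p < n" "blk_idx (blk_rev q) = blk_idx q" "blk_idx (blk_rev p) = blk_idx p"
    using pq by (auto simp: blk_rev_less)
  have "X $$ (blk_rev q, blk_rev p) = (if blk_rev q = blk_rev p then f (blk_idx (blk_rev q)) else 0)"
    using X(2) r out unfolding scalar_outside_def by auto
  then show "star X $$ (p, q) = (if p = q then cnj (f (blk_idx p)) else 0)"
    using blk_star_entry[OF X(1) pq] blk_rev_eq_iff[OF pq(2,1)] r by auto
qed

lemma scalar_outside_congruence:
  assumes C: "C \<in> carrier_mat n n" "scalar_outside B f C" and S: "S \<in> carrier_mat n n" "scalar_outside B (\<lambda>i. 1) S"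
  shows "scalar_outside B f (star S * C * S)"
proof -
  have "scalar_outside B (\<lambda>i. 1) (star S)" using scalar_outside_blk_star[OF S] by simp
  then have "scalar_outside B (\<lambda>i. 1 * f i) (star S * C)"
    using scalar_outside_mult[OF blk_star_carrier _ C] by blast
  then have "scalar_outside B (\<lambda>i. 1 * f i * 1) (star S * C * S)"
    using scalar_outside_mult[OF _ _ S] C(1) by simp
  then show ?thesis by simp
qed

section \<open>Block transfers and Toeplitz blocks\<close>

definition blk_transfer :: "nat \<Rightarrow> nat \<Rightarrow> complex mat" where
  "blk_transfer l k = mat n n (\<lambda>(p, q). if blk_idx p = l \<and> blk_idx q = k \<and> blk_pos p = blk_pos q then 1 else 0)"

lemma blk_transfer_carrier[simp]: "blk_transfer l k \<in> carrier_mat n n"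
  unfolding blk_transfer_def by simp

lemma blk_transfer_dim[simp]: "dim_row (blk_transfer l k) = n" "dim_col (blk_transfer l k) = n"
  unfolding blk_transfer_def by simp_all

lemma blk_transfer_entry:
  "p < n \<Longrightarrow> q < n \<Longrightarrow>
   blk_transfer l k $$ (p, q) = (if blk_idx p = l \<and> blk_idx q = k \<and> blk_pos p = blk_pos q then 1 else 0)"
  unfolding blk_transfer_def by simp

lemma blk_transfer_mem_centralizer:
  assumes "N ! l = N ! k"
  shows "blk_transfer l k \<in> centralizer"
  unfolding centralizer_iff_entries[OF blk_transfer_carrier]
proof (intro allI impI)
  fix p q assume pq: "p < n" "q < n"
  let ?C = "blk_idx p = l \<and> blk_idx q = k \<and> blk_pos p + 1 = blk_pos q"
  have "0 < blk_pos q \<Longrightarrow> blk_transfer l k $$ (p, q - 1) = (if ?C then 1 else 0)"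
    using blk_pred[OF pq(2)] by (auto simp: blk_transfer_entry pq)
  moreover have "blk_pos p + 1 < N ! blk_idx p \<Longrightarrow> blk_transfer l k $$ (p + 1, q) = (if ?C then 1 else 0)"
    using blk_succ[OF pq(1)] by (auto simp: blk_transfer_entry pq)
  moreover have "?C \<Longrightarrow> 0 < blk_pos q \<and> blk_pos p + 1 < N ! blk_idx p"
    using blk_pos_less[OF pq(2)] assms by auto
  ultimately show "(if 0 < blk_pos q then blk_transfer l k $$ (p, q - 1) else 0) =
      (if blk_pos p + 1 < N ! blk_idx p then blk_transfer l k $$ (p + 1, q) else 0)"
    by auto
qed

lemma scalar_outside_blk_transfer: "l \<in> B \<Longrightarrow> k \<in> B \<Longrightarrow> scalar_outside B (\<lambda>i. 0) (blk_transfer l k)"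
  unfolding scalar_outside_def by (auto simp: blk_transfer_entry)

lemma blk_transfer_square:
  assumes "l \<noteq> k"
  shows "blk_transfer l k * blk_transfer l k = 0\<^sub>m n n"
proof (rule eq_matI)
  fix p q assume "p < dim_row (0\<^sub>m n n :: complex mat)" "q < dim_col (0\<^sub>m n n :: complex mat)"
  then have pq: "p < n" "q < n" by auto
  have "(blk_transfer l k * blk_transfer l k) $$ (p, q) = (\<Sum>s<n. blk_transfer l k $$ (p, s) * blk_transfer l k $$ (s, q))"
    by (rule mat_mult_entry[OF blk_transfer_carrier blk_transfer_carrier pq])
  also have "\<dots> = 0" by (rule sum.neutral) (use assms pq in \<open>auto simp: blk_transfer_entry\<close>)
  finally show "(blk_transfer l k * blk_transfer l k) $$ (p, q) = 0\<^sub>m n n $$ (p, q)" using pq by simp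
qed (use blk_transfer_carrier in auto)

lemma blk_transfer_col_blk_off:
  assumes "l < length N" "k < length N" "t < n"
  shows "blk_transfer l k $$ (t, blk_off N k) = (if t = blk_off N l then 1 else 0)"
  using blk_transfer_entry[OF assms(3) blk_off_less[OF assms(2)]] eq_blk_off_iff[OF assms(3,1)] assms by auto

lemma blk_star_blk_transfer_row_blk_off:
  assumes "N ! l = N ! k" and "l < length N" "k < length N" and s: "s < n"
  shows "star (blk_transfer l k) $$ (blk_off N k, s) = (if s = blk_off N l then 1 else 0)"
proof -
  have k: "blk_off N k < n" "blk_rev (blk_off N k) < n" using assms blk_off_less blk_rev_less by auto
  have "blk_pos (blk_rev s) = blk_pos (blk_rev (blk_off N k)) \<and> blk_idx s = l \<longleftrightarrow> blk_idx s = l \<and> blk_pos s = 0"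
    using blk_pos_blk_rev[OF s] blk_pos_blk_rev[OF k(1)] blk_pos_less[OF s] blocks_pos[of k] assms by auto
  then show ?thesis
    using blk_star_entry[OF blk_transfer_carrier k(1) s] blk_transfer_entry[OF blk_rev_less[OF s] k(2)]
      eq_blk_off_iff[OF s assms(2)] s k assms by auto
qed

definition toeplitz_blk :: "nat \<Rightarrow> complex fps \<Rightarrow> complex mat" where
  "toeplitz_blk k s = mat n n (\<lambda>(p, q).
     if blk_idx p = k \<and> blk_idx q = k \<and> blk_pos p \<le> blk_pos q then fps_nth s (blk_pos q - blk_pos p) else 0)"

lemma toeplitz_blk_carrier[simp]: "toeplitz_blk k s \<in> carrier_mat n n"
  unfolding toeplitz_blk_def by simp

lemma toeplitz_blk_dim[simp]: "dim_row (toeplitz_blk k s) = n" "dim_col (toeplitz_blk k s) = n"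
  unfolding toeplitz_blk_def by simp_all

lemma toeplitz_blk_entry:
  "p < n \<Longrightarrow> q < n \<Longrightarrow> toeplitz_blk k s $$ (p, q) =
    (if blk_idx p = k \<and> blk_idx q = k \<and> blk_pos p \<le> blk_pos q then fps_nth s (blk_pos q - blk_pos p) else 0)"
  unfolding toeplitz_blk_def by simp

lemma toeplitz_blk_mem_centralizer: "toeplitz_blk k s \<in> centralizer"
  unfolding centralizer_iff_entries[OF toeplitz_blk_carrier]
proof (intro allI impI)
  fix p q assume pq: "p < n" "q < n"
  let ?C = "blk_idx p = k \<and> blk_idx q = k \<and> blk_pos p < blk_pos q"
  let ?t = "fps_nth s (blk_pos q - 1 - blk_pos p)"
  have "0 < blk_pos q \<Longrightarrow> toeplitz_blk k s $$ (p, q - 1) = (if ?C then ?t else 0)"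
    using blk_pred[OF pq(2)] by (auto simp: toeplitz_blk_entry pq)
  moreover have "blk_pos p + 1 < N ! blk_idx p \<Longrightarrow> toeplitz_blk k s $$ (p + 1, q) = (if ?C then ?t else 0)"
    using blk_succ[OF pq(1)] by (auto simp: toeplitz_blk_entry pq)
  moreover have "?C \<Longrightarrow> 0 < blk_pos q \<and> blk_pos p + 1 < N ! blk_idx p"
    using blk_pos_less[OF pq(2)] by auto
  ultimately show "(if 0 < blk_pos q then toeplitz_blk k s $$ (p, q - 1) else 0) =
      (if blk_pos p + 1 < N ! blk_idx p then toeplitz_blk k s $$ (p + 1, q) else 0)"
    by auto
qed

lemma scalar_outside_toeplitz_blk: "k \<in> B \<Longrightarrow> scalar_outside B (\<lambda>i. 0) (toeplitz_blk k s)"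
  unfolding scalar_outside_def by (auto simp: toeplitz_blk_entry)

lemma toeplitz_blk_mult:
  assumes k: "k < length N"
  shows "toeplitz_blk k s * toeplitz_blk k u = toeplitz_blk k (s * u)"
proof (rule eq_matI)
  fix p q assume "p < dim_row (toeplitz_blk k (s * u))" "q < dim_col (toeplitz_blk k (s * u))"
  then have pq: "p < n" "q < n" by auto
  have "(toeplitz_blk k s * toeplitz_blk k u) $$ (p, q) =
      (\<Sum>t<n. toeplitz_blk k s $$ (p, t) * toeplitz_blk k u $$ (t, q))"
    by (rule mat_mult_entry[OF toeplitz_blk_carrier toeplitz_blk_carrier pq])
  also have "\<dots> = toeplitz_blk k (s * u) $$ (p, q)"
  proof (cases "blk_idx p = k \<and> blk_idx q = k")
    case True
    have "(\<Sum>t<n. toeplitz_blk k s $$ (p, t) * toeplitz_blk k u $$ (t, q)) =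
        (\<Sum>c<N ! k. toeplitz_blk k s $$ (p, blk_off N k + c) * toeplitz_blk k u $$ (blk_off N k + c, q))"
      by (rule sum_blk_supported[OF k]) (auto simp: toeplitz_blk_entry pq)
    also have "\<dots> = (\<Sum>c<N ! k. (if blk_pos p \<le> c then fps_nth s (c - blk_pos p) else 0) *
        (if c \<le> blk_pos q then fps_nth u (blk_pos q - c) else 0))"
      by (rule sum.cong) (use True k pq in \<open>auto simp: toeplitz_blk_entry\<close>)
    also have "\<dots> = (if blk_pos p \<le> blk_pos q then fps_nth (s * u) (blk_pos q - blk_pos p) else 0)"
      by (rule sum_truncated_convolution) (use blk_pos_less[OF pq(2)] True in simp)
    also have "\<dots> = toeplitz_blk k (s * u) $$ (p, q)"
      using True by (simp add: toeplitz_blk_entry pq)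
    finally show ?thesis .
  qed (auto simp: toeplitz_blk_entry pq intro!: sum.neutral)
  finally show "(toeplitz_blk k s * toeplitz_blk k u) $$ (p, q) = toeplitz_blk k (s * u) $$ (p, q)" .
qed auto

lemma blk_star_toeplitz_blk: "star (toeplitz_blk k s) = toeplitz_blk k (fps_cnj s)"
proof (rule eq_matI)
  fix p q assume "p < dim_row (toeplitz_blk k (fps_cnj s))" "q < dim_col (toeplitz_blk k (fps_cnj s))"
  then have pq: "p < n" "q < n" by auto
  have l: "blk_pos p < N ! blk_idx p" "blk_pos q < N ! blk_idx q" using blk_pos_less pq by auto
  show "star (toeplitz_blk k s) $$ (p, q) = toeplitz_blk k (fps_cnj s) $$ (p, q)"
  proof (cases "blk_idx p = k \<and> blk_idx q = k")
    case True
    have "N ! k - 1 - blk_pos q \<le> N ! k - 1 - blk_pos p \<longleftrightarrow> blk_pos p \<le> blk_pos q"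
      "blk_pos p \<le> blk_pos q \<Longrightarrow> (N ! k - 1 - blk_pos p) - (N ! k - 1 - blk_pos q) = blk_pos q - blk_pos p"
      using l True by auto
    then show ?thesis using blk_star_entry[OF toeplitz_blk_carrier pq] True pq
      by (simp add: toeplitz_blk_entry blk_rev_less blk_pos_blk_rev)
  qed (use blk_star_entry[OF toeplitz_blk_carrier pq] pq in \<open>auto simp: toeplitz_blk_entry blk_rev_less\<close>)
qed auto

lemma toeplitz_blk_const: "toeplitz_blk k (fps_const c) = sign_blkdiag N (\<lambda>i. if i = k then c else 0)"
proof (rule eq_matI)
  fix p q assume "p < dim_row (sign_blkdiag N (\<lambda>i. if i = k then c else 0))"
    "q < dim_col (sign_blkdiag N (\<lambda>i. if i = k then c else 0))"
  then have pq: "p < n" "q < n" by auto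
  have "(blk_idx p = k \<and> blk_idx q = k \<and> blk_pos p \<le> blk_pos q \<and> blk_pos q - blk_pos p = 0) \<longleftrightarrow>
      (p = q \<and> blk_idx p = k)"
    using index_eq_iff[OF pq] by auto
  then show "toeplitz_blk k (fps_const c) $$ (p, q) = sign_blkdiag N (\<lambda>i. if i = k then c else 0) $$ (p, q)"
    by (auto simp: toeplitz_blk_entry sign_blkdiag_entry pq)
qed auto

lemma toeplitz_blk_one: "toeplitz_blk k 1 = blk_proj k"
  using toeplitz_blk_const[of k 1] unfolding blk_proj_def by simp

lemma sign_blkdiag_mult_toeplitz_blk: "sign_blkdiag N f * toeplitz_blk k s = f k \<cdot>\<^sub>m toeplitz_blk k s"
proof (rule eq_matI)
  fix p q assume "p < dim_row (f k \<cdot>\<^sub>m toeplitz_blk k s)" "q < dim_col (f k \<cdot>\<^sub>m toeplitz_blk k s)"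
  then have pq: "p < n" "q < n" by auto
  show "(sign_blkdiag N f * toeplitz_blk k s) $$ (p, q) = (f k \<cdot>\<^sub>m toeplitz_blk k s) $$ (p, q)"
    using sign_blkdiag_mult_entry[OF toeplitz_blk_carrier pq] pq by (auto simp: toeplitz_blk_entry)
qed auto

lemma toeplitz_blk_mult_sign_blkdiag: "toeplitz_blk k s * sign_blkdiag N f = f k \<cdot>\<^sub>m toeplitz_blk k s"
proof (rule eq_matI)
  fix p q assume "p < dim_row (f k \<cdot>\<^sub>m toeplitz_blk k s)" "q < dim_col (f k \<cdot>\<^sub>m toeplitz_blk k s)"
  then have pq: "p < n" "q < n" by auto
  show "(toeplitz_blk k s * sign_blkdiag N f) $$ (p, q) = (f k \<cdot>\<^sub>m toeplitz_blk k s) $$ (p, q)"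
    using mult_sign_blkdiag_entry[OF toeplitz_blk_carrier pq] pq by (auto simp: toeplitz_blk_entry)
qed auto

lemma blk_proj_toeplitz_blk:
  "blk_proj k * toeplitz_blk k s = toeplitz_blk k s" "toeplitz_blk k s * blk_proj k = toeplitz_blk k s"
  "blk_coproj k * toeplitz_blk k s = 0\<^sub>m n n" "toeplitz_blk k s * blk_coproj k = 0\<^sub>m n n"
  unfolding blk_proj_def blk_coproj_def
  by (auto intro!: eq_matI simp: sign_blkdiag_mult_toeplitz_blk toeplitz_blk_mult_sign_blkdiag)

definition blk_symbol :: "complex mat \<Rightarrow> nat \<Rightarrow> complex fps" where
  "blk_symbol X k = Abs_fps (\<lambda>d. if d < N ! k then X $$ (blk_off N k, blk_off N k + d) else 0)"

lemma centralizer_supported_eq_toeplitz_blk: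
  assumes X: "X \<in> centralizer" and k: "k < length N"
    and supp: "\<And>p q. p < n \<Longrightarrow> q < n \<Longrightarrow> \<not> (blk_idx p = k \<and> blk_idx q = k) \<Longrightarrow> X $$ (p, q) = 0"
  shows "X = toeplitz_blk k (blk_symbol X k)"
proof (rule eq_matI)
  have L: "intertwines_shift (N ! k) (N ! k) (\<lambda>r c. X $$ (blk_off N k + r, blk_off N k + c))"
    using centralizer_block[OF X k k] .
  fix p q assume "p < dim_row (toeplitz_blk k (blk_symbol X k))" "q < dim_col (toeplitz_blk k (blk_symbol X k))"
  then have pq: "p < n" "q < n" by auto
  show "X $$ (p, q) = toeplitz_blk k (blk_symbol X k) $$ (p, q)"
  proof (cases "blk_idx p = k \<and> blk_idx q = k")
    case True
    have e: "p = blk_off N k + blk_pos p" "q = blk_off N k + blk_pos q"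
      using blk_off_idx_add_pos[OF pq(1)] blk_off_idx_add_pos[OF pq(2)] unfolding True[THEN conjunct1]
        True[THEN conjunct2] by simp_all
    have l: "blk_pos p < N ! k" "blk_pos q < N ! k"
      using blk_pos_less[OF pq(1)] blk_pos_less[OF pq(2)] True by simp_all
    show ?thesis
    proof (cases "blk_pos p \<le> blk_pos q")
      case True
      then have "X $$ (blk_off N k + blk_pos p, blk_off N k + blk_pos q) =
          X $$ (blk_off N k + 0, blk_off N k + (blk_pos q - blk_pos p))"
        using intertwines_shift_toeplitz[OF L l] by simp
      then show ?thesis using e l True \<open>blk_idx p = k \<and> blk_idx q = k\<close> pq
        by (auto simp: toeplitz_blk_entry blk_symbol_def)
    next
      case False
      then have "X $$ (blk_off N k + blk_pos p, blk_off N k + blk_pos q) = 0"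
        using intertwines_shift_zero_wide[OF L _ l] by simp
      then show ?thesis using e False pq by (auto simp: toeplitz_blk_entry)
    qed
  qed (use supp pq in \<open>auto simp: toeplitz_blk_entry\<close>)
qed (use X centralizer_carrier in auto)

lemma blk_proj_compress_eq_toeplitz_blk:
  assumes X: "X \<in> centralizer" and k: "k < length N"
  shows "blk_proj k * X * blk_proj k = toeplitz_blk k (blk_symbol X k)"
proof -
  have XM: "X \<in> carrier_mat n n" using X centralizer_carrier by auto
  let ?Y = "blk_proj k * X * blk_proj k"
  have Y: "?Y \<in> centralizer"
    unfolding blk_proj_def using centralizer_mult sign_blkdiag_mem_centralizer X by blast
  have "?Y = toeplitz_blk k (blk_symbol ?Y k)"
    by (rule centralizer_supported_eq_toeplitz_blk[OF Y k]) (auto simp: blk_proj_mult_entries(1)[OF XM])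
  also have "blk_symbol ?Y k = blk_symbol X k"
  proof -
    have "?Y $$ (blk_off N k, blk_off N k + d) = X $$ (blk_off N k, blk_off N k + d)" if "d < N ! k" for d
      using blk_proj_mult_entries(1)[OF XM] that k blk_off_less[OF k] by simp
    then show ?thesis unfolding blk_symbol_def by (auto intro!: arg_cong[where f = Abs_fps])
  qed
  finally show ?thesis .
qed

section \<open>Making a pivot nonzero\<close>

definition admissible :: "complex mat \<Rightarrow> bool" where
  "admissible C \<longleftrightarrow> C \<in> centralizer \<and> star C = C \<and> invertible_mat C"

lemma admissible_congruence:
  assumes C: "admissible C" and S: "S \<in> centralizer" "invertible_mat S"
  shows "admissible (star S * C * S)"
proof -
  have CM: "C \<in> carrier_mat n n" and SM: "S \<in> carrier_mat n n"
    using C S centralizer_carrier unfolding admissible_def by auto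
  have "star S * C * S \<in> centralizer"
    using C S centralizer_mult centralizer_blk_star unfolding admissible_def by blast
  moreover have "star (star S * C * S) = star S * C * S"
    using C CM SM by (simp add: blk_star_mult mult_assoc_sq admissible_def)
  moreover have "invertible_mat (star S * C * S)"
    using C S CM SM invertible_blk_star invertible_mat_mult unfolding admissible_def
    by (metis blk_star_carrier mult_carrier_sq)
  ultimately show ?thesis unfolding admissible_def by blast
qed

lemma centralizer_blk_start_col_zero:
  assumes X: "X \<in> centralizer" and lk: "l < length N" "k < length N" "N ! l \<le> N ! k"
    and r: "r < N ! l" "0 < r \<or> N ! l < N ! k"
  shows "X $$ (blk_off N l + r, blk_off N k) = 0"
  using intertwines_shift_zero_wide[OF centralizer_block[OF X lk(1,2)] lk(3) r(1), of 0] r blocks_pos[OF lk(2)]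
  by auto

lemma admissible_blk_start_col_nonzero:
  assumes C: "admissible C" "scalar_outside B f C" and B: "B \<subseteq> {..<length N}"
    and k: "k \<in> B" "\<And>l. l \<in> B \<Longrightarrow> N ! l \<le> N ! k"
  shows "\<exists>l\<in>B. N ! l = N ! k \<and> C $$ (blk_off N l, blk_off N k) \<noteq> 0"
proof (rule ccontr)
  assume none: "\<not> (\<exists>l\<in>B. N ! l = N ! k \<and> C $$ (blk_off N l, blk_off N k) \<noteq> 0)"
  have kN: "k < length N" using B k by auto
  have CM: "C \<in> carrier_mat n n" using C centralizer_carrier unfolding admissible_def by auto
  have col: "C $$ (s, blk_off N k) = 0" if s: "s < n" for s
  proof (cases "blk_idx s \<in> B")
    case False
    then have "s \<noteq> blk_off N k" using k kN by auto
    then show ?thesis using C(2) False s blk_off_less[OF kN] unfolding scalar_outside_def by auto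
  next
    case True
    have "s = blk_off N (blk_idx s) + blk_pos s" using blk_off_idx_add_pos[OF s] by simp
    moreover have "C $$ (blk_off N (blk_idx s) + blk_pos s, blk_off N k) = 0"
    proof (cases "0 < blk_pos s \<or> N ! blk_idx s < N ! k")
      case True
      then show ?thesis using centralizer_blk_start_col_zero C kN k(2) \<open>blk_idx s \<in> B\<close> blk_idx_less[OF s]
          blk_pos_less[OF s] unfolding admissible_def by blast
    next
      case False
      then have "blk_pos s = 0" "N ! blk_idx s = N ! k" using k(2)[OF \<open>blk_idx s \<in> B\<close>] by auto
      then show ?thesis using none \<open>blk_idx s \<in> B\<close> by auto
    qed
    ultimately show ?thesis by simp
  qed
  obtain U where U: "U \<in> carrier_mat n n" "U * C = 1\<^sub>m n"
    using C(1) invertible_mat_iff_carrier[OF CM] unfolding admissible_def by blast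
  have "(U * C) $$ (blk_off N k, blk_off N k) = (\<Sum>s<n. U $$ (blk_off N k, s) * C $$ (s, blk_off N k))"
    using mat_mult_entry[OF U(1) CM] blk_off_less[OF kN] by blast
  also have "\<dots> = 0" using col by simp
  finally show False using U blk_off_less[OF kN] by simp
qed

lemma hermitian_blk_start_entry:
  assumes C: "C \<in> centralizer" "star C = C" and lk: "l < length N" "k < length N" "N ! l = N ! k"
  shows "C $$ (blk_off N k, blk_off N l) = cnj (C $$ (blk_off N l, blk_off N k))"
proof -
  have CM: "C \<in> carrier_mat n n" using C centralizer_carrier by auto
  let ?m = "N ! k - 1"
  have "blk_rev (blk_off N l) = blk_off N l + ?m" "blk_rev (blk_off N k) = blk_off N k + ?m"
    unfolding blk_rev_def using lk by simp_all
  moreover have "C $$ (blk_off N l + ?m, blk_off N k + ?m) = C $$ (blk_off N l + 0, blk_off N k + (?m - ?m))"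
    using intertwines_shift_toeplitz[OF centralizer_block[OF C(1) lk(1,2)], of ?m ?m] blocks_pos lk by simp
  ultimately have "C $$ (blk_rev (blk_off N l), blk_rev (blk_off N k)) = C $$ (blk_off N l, blk_off N k)"
    by simp
  then show ?thesis
    using blk_star_entry[OF CM blk_off_less[OF lk(2)] blk_off_less[OF lk(1)]] C(2) by simp
qed

lemma congruence_blk_transfer_blk_start_entry:
  fixes c :: complex
  assumes X: "X \<in> carrier_mat n n" and lk: "l < length N" "k < length N" "l \<noteq> k" "N ! l = N ! k"
  defines "S \<equiv> 1\<^sub>m n + c \<cdot>\<^sub>m blk_transfer l k"
  defines "a \<equiv> blk_off N k" and "b \<equiv> blk_off N l"
  shows "(star S * X * S) $$ (a, a) = X $$ (a, a) + cnj c * X $$ (b, a) + c * (X $$ (a, b) + cnj c * X $$ (b, b))"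
proof -
  have ab: "a < n" "b < n" "a \<noteq> b" unfolding a_def b_def using lk blk_off_less blk_idx_off by metis+
  have SM: "S \<in> carrier_mat n n" unfolding S_def by simp
  have col: "S $$ (t, a) = (if t = a then 1 else 0) + c * (if t = b then 1 else 0)" if "t < n" for t
    unfolding S_def a_def b_def using that ab blk_transfer_col_blk_off[OF lk(1,2) that] by (simp add: a_def)
  have "star S = 1\<^sub>m n + cnj c \<cdot>\<^sub>m star (blk_transfer l k)"
    unfolding S_def by (simp add: blk_star_add blk_star_smult)
  then have row: "star S $$ (a, s) = (if s = a then 1 else 0) + cnj c * (if s = b then 1 else 0)" if "s < n" for s
    using that ab blk_star_blk_transfer_row_blk_off[OF lk(4,1,2) that] unfolding a_def b_def by simp
  have SX: "(star S * X) $$ (a, t) = X $$ (a, t) + cnj c * X $$ (b, t)" if t: "t < n" for t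
    using mat_mult_entry[OF blk_star_carrier X ab(1) t] row sum_two_point[OF ab, of "cnj c"] by simp
  have "(star S * X * S) $$ (a, a) = (\<Sum>t<n. S $$ (t, a) * (star S * X) $$ (a, t))"
    using mat_mult_entry[OF mult_carrier_sq[OF blk_star_carrier X] SM ab(1) ab(1)] by (simp add: mult.commute)
  also have "\<dots> = (star S * X) $$ (a, a) + c * (star S * X) $$ (a, b)"
    using col sum_two_point[OF ab, of c] by simp
  finally show ?thesis using SX ab by simp
qed

lemma exists_congruence_blk_start_nonzero_transfer:
  assumes C: "C \<in> centralizer" "star C = C"
    and lk: "l \<in> B" "k \<in> B" "l < length N" "k < length N" "l \<noteq> k" "N ! l = N ! k"
    and diag: "C $$ (blk_off N k, blk_off N k) = 0" "C $$ (blk_off N l, blk_off N l) = 0"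
    and nz: "C $$ (blk_off N l, blk_off N k) \<noteq> 0"
  shows "\<exists>S\<in>centralizer. invertible_mat S \<and> scalar_outside B (\<lambda>i. 1) S \<and>
           (star S * C * S) $$ (blk_off N k, blk_off N k) \<noteq> 0"
proof -
  define c where "c = C $$ (blk_off N l, blk_off N k)"
  define S where "S = 1\<^sub>m n + c \<cdot>\<^sub>m blk_transfer l k"
  have "S \<in> centralizer"
    unfolding S_def using centralizer_add centralizer_smult one_mem_centralizer
      blk_transfer_mem_centralizer[OF lk(6)] by blast
  moreover have "invertible_mat S"
    unfolding S_def by (rule invertible_one_plus_square_zero[OF blk_transfer_carrier blk_transfer_square[OF lk(5)]])
  moreover have "scalar_outside B (\<lambda>i. 1 + c * 0) S"
    unfolding S_def using scalar_outside_add[OF _ _ scalar_outside_one scalar_outside_smult[OF _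
          scalar_outside_blk_transfer[OF lk(1,2)]]] by simp
  then have "scalar_outside B (\<lambda>i. 1) S" by simp
  moreover have "(star S * C * S) $$ (blk_off N k, blk_off N k) = 2 * (cnj c * c)"
    using congruence_blk_transfer_blk_start_entry[OF centralizer_carrier[OF C(1)] lk(3-6), of c] diag
      hermitian_blk_start_entry[OF C lk(3,4,6)] unfolding S_def c_def by simp
  moreover have "2 * (cnj c * c) \<noteq> 0" using nz unfolding c_def by simp
  ultimately show ?thesis by metis
qed

lemma exists_congruence_blk_start_nonzero:
  assumes C: "admissible C" "scalar_outside B f C" and B: "B \<subseteq> {..<length N}" "B \<noteq> {}"
  shows "\<exists>k\<in>B. \<exists>S\<in>centralizer. invertible_mat S \<and> scalar_outside B (\<lambda>i. 1) S \<and>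
           (star S * C * S) $$ (blk_off N k, blk_off N k) \<noteq> 0"
proof -
  have CM: "C \<in> carrier_mat n n" and CH: "C \<in> centralizer" "star C = C"
    using C centralizer_carrier unfolding admissible_def by auto
  obtain k where k: "k \<in> B" "\<And>l. l \<in> B \<Longrightarrow> N ! l \<le> N ! k"
    using Max_in[of "(!) N ` B"] Max_ge[of "(!) N ` B"] finite_subset[OF B(1)] B(2) by fastforce
  obtain l where l: "l \<in> B" "N ! l = N ! k" "C $$ (blk_off N l, blk_off N k) \<noteq> 0"
    using admissible_blk_start_col_nonzero[OF C B(1) k] by blast
  have lkN: "l < length N" "k < length N" using B k l by auto
  have id: "1\<^sub>m n \<in> centralizer \<and> invertible_mat (1\<^sub>m n :: complex mat) \<and> scalar_outside B (\<lambda>i. 1) (1\<^sub>m n)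
      \<and> star (1\<^sub>m n) * C * 1\<^sub>m n = C"
    using one_mem_centralizer invertible_mat_one scalar_outside_one CM by auto
  consider "C $$ (blk_off N k, blk_off N k) \<noteq> 0" | "C $$ (blk_off N l, blk_off N l) \<noteq> 0"
    | "C $$ (blk_off N k, blk_off N k) = 0" "C $$ (blk_off N l, blk_off N l) = 0" "l \<noteq> k"
    using l(3) by metis
  then show ?thesis
  proof cases
    case 3
    then show ?thesis
      using exists_congruence_blk_start_nonzero_transfer[OF CH l(1) k(1) lkN 3(3) l(2) 3(1,2) l(3)] k(1) by blast
  qed (use id k l in metis)+
qed

section \<open>Splitting off one block\<close>

lemma toeplitz_blk_inverse:
  assumes "k < length N" "fps_nth s 0 \<noteq> 0"
  shows "toeplitz_blk k s * toeplitz_blk k (inverse s) = blk_proj k"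
    and "toeplitz_blk k (inverse s) * toeplitz_blk k s = blk_proj k"
  using assms by (simp_all add: toeplitz_blk_mult inverse_mult_eq_1 inverse_mult_eq_1' toeplitz_blk_one)

lemma blk_symbol_self_conjugate:
  assumes C: "C \<in> centralizer" "star C = C" and k: "k < length N"
  shows "fps_cnj (blk_symbol C k) = blk_symbol C k"
proof (rule fps_ext)
  fix d
  have CM: "C \<in> carrier_mat n n" using C centralizer_carrier by auto
  have "star (blk_proj k * C * blk_proj k) = blk_proj k * C * blk_proj k"
    using C(2) CM by (simp add: blk_star_mult mult_assoc_sq blk_proj_algebra)
  then have T: "toeplitz_blk k (fps_cnj (blk_symbol C k)) = toeplitz_blk k (blk_symbol C k)"
    unfolding blk_proj_compress_eq_toeplitz_blk[OF C(1) k] blk_star_toeplitz_blk .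
  show "fps_nth (fps_cnj (blk_symbol C k)) d = fps_nth (blk_symbol C k) d"
  proof (cases "d < N ! k")
    case True
    then show ?thesis
      using arg_cong[OF T, of "\<lambda>X. X $$ (blk_off N k, blk_off N k + d)"] k blk_off_less[OF k]
      by (simp add: toeplitz_blk_entry)
  qed (simp add: blk_symbol_def)
qed

lemma congruence_clearing_blk_row:
  assumes C: "C \<in> carrier_mat n n" "star C = C"
    and G: "G \<in> carrier_mat n n" "blk_proj k * G = G" "blk_proj k * C * G = blk_proj k"
  defines "E \<equiv> blk_proj k" and "Q \<equiv> blk_coproj k"
  defines "S \<equiv> 1\<^sub>m n + (-1) \<cdot>\<^sub>m (G * C * Q)"
  shows "E * (star S * C * S) * Q = 0\<^sub>m n n" and "E * (star S * C * S) * E = E * C * E"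
proof -
  have EQ[simp]: "E \<in> carrier_mat n n" "Q \<in> carrier_mat n n" "E * Q = 0\<^sub>m n n" "Q * E = 0\<^sub>m n n"
    "Q * Q = Q" "star Q = Q"
    unfolding E_def Q_def by (simp_all add: blk_proj_algebra)
  define Z where "Z = G * C * Q"
  have Z: "Z \<in> carrier_mat n n" "Z * Q = Z" "Z * E = 0\<^sub>m n n"
    unfolding Z_def using C G by (simp_all add: mult_assoc_sq)
  have "E * star Z = E * (Q * (C * star G))"
    unfolding Z_def using C G by (simp add: blk_star_mult mult_assoc_sq)
  also have "\<dots> = E * Q * (C * star G)" by (rule mult_assoc_sq[symmetric]) (use C in simp_all)
  finally have EZ: "E * star Z = 0\<^sub>m n n" using C by simp
  have SM: "S \<in> carrier_mat n n" unfolding S_def using C G by simp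
  have ES: "E * star S = E" and SQ: "S * Q = Q + (-1) \<cdot>\<^sub>m Z" and SE: "S * E = E"
    unfolding S_def Z_def[symmetric] using Z EZ
    by (simp_all add: blk_star_add blk_star_smult mult_add_distrib_sq add_mult_distrib_sq
        mult_smult_distrib_sq mult_smult_assoc_sq)
  have "E * (star S * C * S) * Q = (E * star S) * C * (S * Q)" using C SM by (simp add: mult_assoc_sq)
  also have "\<dots> = E * C * Q + (-1) \<cdot>\<^sub>m (E * C * G * C * Q)"
    unfolding ES SQ Z_def using C G by (simp add: mult_assoc_sq mult_add_distrib_sq mult_smult_distrib_sq)
  also have "\<dots> = 0\<^sub>m n n"
    unfolding G(3)[folded E_def] using carrier_matD[OF mult_carrier_sq[OF mult_carrier_sq[OF EQ(1) C(1)] EQ(2)]]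
    by (auto intro!: eq_matI)
  finally show "E * (star S * C * S) * Q = 0\<^sub>m n n" .
  have "E * (star S * C * S) * E = (E * star S) * C * (S * E)" using C SM by (simp add: mult_assoc_sq)
  then show "E * (star S * C * S) * E = E * C * E" unfolding ES SE .
qed

lemma exists_congruence_clearing_blk_row:
  assumes C: "admissible C" "scalar_outside B f C" and k: "k \<in> B" "k < length N"
    and g0: "fps_nth (blk_symbol C k) 0 \<noteq> 0"
  shows "\<exists>S\<in>centralizer. invertible_mat S \<and> scalar_outside B (\<lambda>i. 1) S \<and>
    blk_proj k * (star S * C * S) * blk_coproj k = 0\<^sub>m n n \<and>
    blk_proj k * (star S * C * S) * blk_proj k = blk_proj k * C * blk_proj k"
proof -
  have CM: "C \<in> carrier_mat n n" and CH: "star C = C" "C \<in> centralizer"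
    using C centralizer_carrier unfolding admissible_def by auto
  define G where "G = toeplitz_blk k (inverse (blk_symbol C k))"
  have G: "G \<in> carrier_mat n n" "blk_proj k * G = G" "blk_coproj k * G = 0\<^sub>m n n"
    unfolding G_def by (simp_all add: blk_proj_toeplitz_blk)
  have "blk_proj k * C * G = blk_proj k * C * blk_proj k * G" using G(1,2) CM by (simp add: mult_assoc_sq)
  then have ECG: "blk_proj k * C * G = blk_proj k"
    unfolding G_def blk_proj_compress_eq_toeplitz_blk[OF CH(2) k(2)] using toeplitz_blk_inverse[OF k(2) g0] by simp
  define Z where "Z = G * C * blk_coproj k"
  have ZM: "Z \<in> carrier_mat n n" unfolding Z_def using G CM by simp
  have "Z * Z = G * (C * ((blk_coproj k * G) * (C * blk_coproj k)))"
    unfolding Z_def using CM by (simp only: mult_assoc_sq mult_carrier_sq G(1) blk_proj_carrier)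
  then have ZZ: "Z * Z = 0\<^sub>m n n" using CM G carrier_matD[OF blk_proj_carrier(2)] by simp
  have "Z \<in> centralizer"
    unfolding Z_def G_def blk_coproj_def
    using centralizer_mult[OF centralizer_mult[OF toeplitz_blk_mem_centralizer CH(2)] sign_blkdiag_mem_centralizer] .
  then have "1\<^sub>m n + (-1) \<cdot>\<^sub>m Z \<in> centralizer"
    using centralizer_add centralizer_smult one_mem_centralizer by blast
  moreover have "scalar_outside B (\<lambda>i. 0 * f i * (if i = k then 0 else 1)) Z"
    unfolding Z_def G_def blk_coproj_def using CM
    by (intro scalar_outside_mult scalar_outside_toeplitz_blk k C(2) scalar_outside_sign_blkdiag) simp_all
  then have ZB: "scalar_outside B (\<lambda>i. 0) Z" by simp
  then have "scalar_outside B (\<lambda>i. 1 + (-1) * 0) (1\<^sub>m n + (-1) \<cdot>\<^sub>m Z)"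
    using scalar_outside_add[OF _ _ scalar_outside_one scalar_outside_smult[OF ZM ZB, of "-1"]] ZM by simp
  ultimately show ?thesis
    using congruence_clearing_blk_row[OF CM CH(1) G(1,2) ECG] invertible_one_plus_square_zero[OF ZM ZZ]
    unfolding Z_def by auto
qed

lemma congruence_blk_proj_plus_coproj:
  assumes C: "C \<in> carrier_mat n n"
    and \<sigma>: "\<sigma> \<in> carrier_mat n n" "blk_proj k * \<sigma> = \<sigma>" "\<sigma> * blk_proj k = \<sigma>"
      "blk_coproj k * \<sigma> = 0\<^sub>m n n" "\<sigma> * blk_coproj k = 0\<^sub>m n n" "star \<sigma> = \<sigma>"
  defines "E \<equiv> blk_proj k" and "Q \<equiv> blk_coproj k"
  defines "S \<equiv> \<sigma> + Q"
  shows "E * (star S * C * S) * Q = \<sigma> * (E * C * Q)" and "E * (star S * C * S) * E = \<sigma> * (E * C * E) * \<sigma>"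
proof -
  have EQ[simp]: "E \<in> carrier_mat n n" "Q \<in> carrier_mat n n" "E * Q = 0\<^sub>m n n" "Q * Q = Q" "star Q = Q"
    unfolding E_def Q_def by (simp_all add: blk_proj_algebra)
  have SM: "S \<in> carrier_mat n n" unfolding S_def using \<sigma> by simp
  have SQ: "S * Q = Q" and SE: "S * E = \<sigma>" and ES: "E * star S = \<sigma>"
    unfolding S_def using \<sigma> blk_proj_algebra[of k]
    by (simp_all add: add_mult_distrib_sq blk_star_add mult_add_distrib_sq E_def Q_def)
  have "E * (star S * C * S) * Q = (E * star S) * C * (S * Q)" using C SM by (simp add: mult_assoc_sq)
  also have "\<dots> = (\<sigma> * E) * C * Q" unfolding ES SQ using \<sigma>(3) by (simp add: E_def)
  also have "\<dots> = \<sigma> * (E * C * Q)" by (simp only: mult_assoc_sq mult_carrier_sq EQ(1,2) \<sigma>(1) C)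
  finally show "E * (star S * C * S) * Q = \<sigma> * (E * C * Q)" .
  have "E * (star S * C * S) * E = (E * star S) * C * (S * E)" using C SM by (simp add: mult_assoc_sq)
  also have "\<dots> = (\<sigma> * E) * C * (E * \<sigma>)" unfolding ES SE using \<sigma>(2,3) by (simp add: E_def)
  also have "\<dots> = \<sigma> * (E * C * E) * \<sigma>" by (simp only: mult_assoc_sq mult_carrier_sq EQ(1,2) \<sigma>(1) C)
  finally show "E * (star S * C * S) * E = \<sigma> * (E * C * E) * \<sigma>" .
qed

lemma exists_congruence_normalizing_blk:
  assumes CM: "C \<in> carrier_mat n n" and k: "k \<in> B" "k < length N"
    and T: "blk_proj k * C * blk_proj k = toeplitz_blk k g" "fps_cnj g = g" "fps_nth g 0 \<noteq> 0"
    and row: "blk_proj k * C * blk_coproj k = 0\<^sub>m n n"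
  shows "\<exists>S\<in>centralizer. invertible_mat S \<and> scalar_outside B (\<lambda>i. 1) S \<and> (\<exists>\<epsilon>. (\<epsilon> = 1 \<or> \<epsilon> = -1) \<and>
    blk_proj k * (star S * C * S) * blk_coproj k = 0\<^sub>m n n \<and>
    blk_proj k * (star S * C * S) * blk_proj k = sign_blkdiag N (\<lambda>i. if i = k then \<epsilon> else 0))"
proof -
  obtain s \<epsilon> where s: "fps_cnj s = s" "fps_nth s 0 \<noteq> 0" "\<epsilon> = 1 \<or> \<epsilon> = -1" "s * g * s = fps_const \<epsilon>"
    using self_conjugate_fps_congruent_sign[OF T(2,3)] by blast
  define S where "S = toeplitz_blk k s + blk_coproj k"
  have "toeplitz_blk k s * toeplitz_blk k g * toeplitz_blk k s = sign_blkdiag N (\<lambda>i. if i = k then \<epsilon> else 0)"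
    using s(4) by (simp add: toeplitz_blk_mult[OF k(2)] toeplitz_blk_const)
  then have normal: "blk_proj k * (star S * C * S) * blk_coproj k = 0\<^sub>m n n"
    "blk_proj k * (star S * C * S) * blk_proj k = sign_blkdiag N (\<lambda>i. if i = k then \<epsilon> else 0)"
    using congruence_blk_proj_plus_coproj[OF CM, of "toeplitz_blk k s" k] T(1) row
    unfolding S_def by (simp_all add: blk_proj_toeplitz_blk blk_star_toeplitz_blk s(1))
  have "S \<in> centralizer"
    unfolding S_def blk_coproj_def
    using centralizer_add toeplitz_blk_mem_centralizer sign_blkdiag_mem_centralizer by blast
  moreover have "invertible_mat S"
  proof -
    define S' where "S' = toeplitz_blk k (inverse s) + blk_coproj k"
    have "S * S' = blk_proj k + blk_coproj k" "S' * S = blk_proj k + blk_coproj k"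
      unfolding S_def S'_def using toeplitz_blk_inverse[OF k(2) s(2)] blk_proj_algebra[of k]
      by (simp_all add: add_mult_distrib_sq mult_add_distrib_sq blk_proj_toeplitz_blk)
    then show ?thesis
      using invertible_mat_iff_carrier[of S n] blk_proj_algebra(5)[of k] unfolding S_def S'_def by fastforce
  qed
  moreover have "scalar_outside B (\<lambda>i. 0 + (if i = k then 0 else 1)) S"
    unfolding S_def blk_coproj_def
    by (rule scalar_outside_add[OF _ _ scalar_outside_toeplitz_blk[OF k(1)] scalar_outside_sign_blkdiag]) simp_all
  then have "scalar_outside B (\<lambda>i. 1) S" by (rule scalar_outside_cong) (use k in auto)
  ultimately show ?thesis using s(3) normal by blast
qed

lemma scalar_outside_remove_blk:
  assumes C: "C \<in> carrier_mat n n" "star C = C" "scalar_outside B f C" and k: "k \<in> B"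
    and row: "blk_proj k * C * blk_coproj k = 0\<^sub>m n n"
    and diag: "blk_proj k * C * blk_proj k = sign_blkdiag N (\<lambda>i. if i = k then \<epsilon> else 0)"
  shows "scalar_outside (B - {k}) (f(k := \<epsilon>)) C"
  unfolding scalar_outside_def
proof (intro allI impI)
  fix p q assume pq: "p < n" "q < n" and out: "\<not> (blk_idx p \<in> B - {k} \<and> blk_idx q \<in> B - {k})"
  have col: "blk_coproj k * C * blk_proj k = 0\<^sub>m n n"
    using arg_cong[OF row, of star] C by (simp add: blk_star_mult mult_assoc_sq blk_proj_algebra)
  show "C $$ (p, q) = (if p = q then (f(k := \<epsilon>)) (blk_idx p) else 0)"
  proof (cases "blk_idx p = k \<or> blk_idx q = k")
    case True
    have "(blk_proj k * C * blk_proj k) $$ (p, q) = (if p = q \<and> blk_idx p = k then \<epsilon> else 0)"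
      "(blk_proj k * C * blk_coproj k) $$ (p, q) = 0" "(blk_coproj k * C * blk_proj k) $$ (p, q) = 0"
      unfolding diag row col using pq by (auto simp: sign_blkdiag_entry)
    then show ?thesis
      unfolding blk_proj_mult_entries[OF C(1) pq] using True index_eq_iff[OF pq] by (auto split: if_splits)
  next
    case False
    then show ?thesis using C(3) out pq unfolding scalar_outside_def by auto
  qed
qed

lemma exists_congruence_reducing_blk:
  assumes C: "admissible C" "scalar_outside B f C" and k: "k \<in> B" "k < length N"
    and g0: "fps_nth (blk_symbol C k) 0 \<noteq> 0"
  shows "\<exists>S\<in>centralizer. invertible_mat S \<and>
           (\<exists>\<epsilon>. (\<epsilon> = 1 \<or> \<epsilon> = -1) \<and> scalar_outside (B - {k}) (f(k := \<epsilon>)) (star S * C * S))"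
proof -
  have CM: "C \<in> carrier_mat n n" and CH: "C \<in> centralizer" "star C = C"
    using C centralizer_carrier unfolding admissible_def by auto
  obtain S1 where S1: "S1 \<in> centralizer" "invertible_mat S1" "scalar_outside B (\<lambda>i. 1) S1"
    and row: "blk_proj k * (star S1 * C * S1) * blk_coproj k = 0\<^sub>m n n"
    and diag: "blk_proj k * (star S1 * C * S1) * blk_proj k = blk_proj k * C * blk_proj k"
    using exists_congruence_clearing_blk_row[OF C k g0] by blast
  have S1M: "S1 \<in> carrier_mat n n" using S1(1) centralizer_carrier by auto
  define C2 where "C2 = star S1 * C * S1"
  have C2: "admissible C2" "scalar_outside B f C2" "C2 \<in> carrier_mat n n"
    unfolding C2_def using admissible_congruence[OF C(1) S1(1,2)]
      scalar_outside_congruence[OF CM C(2) S1M S1(3)] S1M CM by simp_all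
  have T: "blk_proj k * C2 * blk_proj k = toeplitz_blk k (blk_symbol C k)"
    unfolding C2_def diag by (rule blk_proj_compress_eq_toeplitz_blk[OF CH(1) k(2)])
  obtain S3 \<epsilon> where S3: "S3 \<in> centralizer" "invertible_mat S3" "scalar_outside B (\<lambda>i. 1) S3"
    and \<epsilon>: "\<epsilon> = 1 \<or> \<epsilon> = -1" and row3: "blk_proj k * (star S3 * C2 * S3) * blk_coproj k = 0\<^sub>m n n"
    and diag3: "blk_proj k * (star S3 * C2 * S3) * blk_proj k = sign_blkdiag N (\<lambda>i. if i = k then \<epsilon> else 0)"
    using exists_congruence_normalizing_blk[OF C2(3) k T blk_symbol_self_conjugate[OF CH k(2)] g0
        row[folded C2_def]] by blast
  have S3M: "S3 \<in> carrier_mat n n" using S3(1) centralizer_carrier by auto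
  have C3: "admissible (star S3 * C2 * S3)" "scalar_outside B f (star S3 * C2 * S3)"
    using admissible_congruence[OF C2(1) S3(1,2)] scalar_outside_congruence[OF C2(3) C2(2) S3M S3(3)] by simp_all
  have "star (S1 * S3) * C * (S1 * S3) = star S3 * C2 * S3"
    unfolding C2_def using CM S1M S3M by (simp add: blk_star_congruence)
  then have "scalar_outside (B - {k}) (f(k := \<epsilon>)) (star (S1 * S3) * C * (S1 * S3))"
    using scalar_outside_remove_blk[OF _ _ C3(2) k(1) row3 diag3] C3(1) centralizer_carrier
    unfolding admissible_def by simp
  moreover have "S1 * S3 \<in> centralizer" "invertible_mat (S1 * S3)"
    using centralizer_mult[OF S1(1) S3(1)] invertible_mat_mult[OF S1M S1(2) S3M S3(2)] by auto
  ultimately show ?thesis using \<epsilon> by blast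
qed

lemma exists_congruence_removing_blk:
  assumes C: "admissible C" "scalar_outside B f C" and B: "B \<subseteq> {..<length N}" "B \<noteq> {}"
  shows "\<exists>k\<in>B. \<exists>S\<in>centralizer. invertible_mat S \<and>
           (\<exists>\<epsilon>. (\<epsilon> = 1 \<or> \<epsilon> = -1) \<and> scalar_outside (B - {k}) (f(k := \<epsilon>)) (star S * C * S))"
proof -
  obtain k S0 where k: "k \<in> B" and S0: "S0 \<in> centralizer" "invertible_mat S0" "scalar_outside B (\<lambda>i. 1) S0"
    and nz: "(star S0 * C * S0) $$ (blk_off N k, blk_off N k) \<noteq> 0"
    using exists_congruence_blk_start_nonzero[OF C B] by blast
  have kN: "k < length N" using k B by auto
  have M: "C \<in> carrier_mat n n" "S0 \<in> carrier_mat n n"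
    using C S0 centralizer_carrier unfolding admissible_def by auto
  have "admissible (star S0 * C * S0)" "scalar_outside B f (star S0 * C * S0)"
    "fps_nth (blk_symbol (star S0 * C * S0) k) 0 \<noteq> 0"
    using admissible_congruence[OF C(1) S0(1,2)] scalar_outside_congruence[OF M(1) C(2) M(2) S0(3)]
      nz blocks_pos[OF kN] by (simp_all add: blk_symbol_def)
  then obtain S \<epsilon> where S: "S \<in> centralizer" "invertible_mat S" "\<epsilon> = 1 \<or> \<epsilon> = -1"
    and red: "scalar_outside (B - {k}) (f(k := \<epsilon>)) (star S * (star S0 * C * S0) * S)"
    using exists_congruence_reducing_blk[OF _ _ k kN] by blast
  have SM: "S \<in> carrier_mat n n" using S(1) centralizer_carrier by auto
  have "S0 * S \<in> centralizer" "invertible_mat (S0 * S)"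
    using centralizer_mult[OF S0(1) S(1)] invertible_mat_mult[OF M(2) S0(2) SM S(2)] by auto
  moreover have "star (S0 * S) * C * (S0 * S) = star S * (star S0 * C * S0) * S"
    using blk_star_congruence[OF M(2) SM M(1)] .
  ultimately show ?thesis using k S(3) red by metis
qed

lemma exists_congruence_sign_blkdiag:
  assumes "finite B" "B \<subseteq> {..<length N}" "admissible C" "scalar_outside B f C"
    and "\<forall>i<length N. i \<notin> B \<longrightarrow> f i = 1 \<or> f i = -1"
  shows "\<exists>S\<in>centralizer. invertible_mat S \<and> (\<exists>\<epsilon>. (\<forall>i<length N. \<epsilon> i = 1 \<or> \<epsilon> i = -1) \<and>
           star S * C * S = sign_blkdiag N \<epsilon>)"
  using assms
proof (induction B arbitrary: C f rule: finite_psubset_induct)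
  case (psubset B)
  have CM: "C \<in> carrier_mat n n" using psubset.prems centralizer_carrier unfolding admissible_def by auto
  show ?case
  proof (cases "B = {}")
    case True
    have "star (1\<^sub>m n) * C * 1\<^sub>m n = sign_blkdiag N f"
      using scalar_outside_empty[OF CM] psubset.prems(3) True CM by simp
    then show ?thesis using one_mem_centralizer invertible_mat_one psubset.prems(4) True by blast
  next
    case False
    obtain k S \<epsilon> where k: "k \<in> B" and S: "S \<in> centralizer" "invertible_mat S" and \<epsilon>: "\<epsilon> = 1 \<or> \<epsilon> = -1"
      and red: "scalar_outside (B - {k}) (f(k := \<epsilon>)) (star S * C * S)"
      using exists_congruence_removing_blk[OF psubset.prems(2,3) psubset.prems(1) False] by blast
    have "\<forall>i<length N. i \<notin> B - {k} \<longrightarrow> (f(k := \<epsilon>)) i = 1 \<or> (f(k := \<epsilon>)) i = -1"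
      using psubset.prems(4) \<epsilon> by auto
    then obtain S' \<epsilon>' where S': "S' \<in> centralizer" "invertible_mat S'"
      and \<epsilon>': "\<forall>i<length N. \<epsilon>' i = 1 \<or> \<epsilon>' i = -1" "star S' * (star S * C * S) * S' = sign_blkdiag N \<epsilon>'"
      using psubset.IH[of "B - {k}"] k psubset.prems(1) red admissible_congruence[OF psubset.prems(2) S] by blast
    have M: "S \<in> carrier_mat n n" "S' \<in> carrier_mat n n" using S(1) S'(1) centralizer_carrier by auto
    have "star (S * S') * C * (S * S') = sign_blkdiag N \<epsilon>'"
      using blk_star_congruence[OF M CM] \<epsilon>'(2) by simp
    moreover have "S * S' \<in> centralizer" "invertible_mat (S * S')"
      using centralizer_mult[OF S(1) S'(1)] invertible_mat_mult[OF M(1) S(2) M(2) S'(2)] by auto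
    ultimately show ?thesis using \<epsilon>'(1) by blast
  qed
qed

end

theorem lemma4p1:
  fixes N :: "nat list" and C :: "complex mat"
  assumes "\<forall>i < length N. 1 \<le> N!i"
    and "sorted N"
    and "C \<in> carrier_mat (blk_size N) (blk_size N)"
    and "invertible_mat C"
    and "N_upper_toeplitz N C"
    and "N_hermitian N C"
  shows "\<exists>S eps. S \<in> carrier_mat (blk_size N) (blk_size N) \<and> invertible_mat S \<and>
           N_upper_toeplitz N S \<and>
           (\<forall>i < length N. eps i = 1 \<or> eps i = -1) \<and>
           blk_star N S * C * S = sign_blkdiag N eps"
proof -
  interpret blocks N using assms(1) by unfold_locales auto
  have "admissible C"
    unfolding admissible_def using assms(4-6) N_upper_toeplitz_iff_centralizer[OF assms(2)]
    unfolding N_hermitian_def by blast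
  then obtain S where S: "S \<in> centralizer" "invertible_mat S"
    and "\<exists>\<epsilon>. (\<forall>i<length N. \<epsilon> i = 1 \<or> \<epsilon> i = -1) \<and> star S * C * S = sign_blkdiag N \<epsilon>"
    using exists_congruence_sign_blkdiag[OF _ _ _ scalar_outside_all_blocks[of "\<lambda>i. 1" C]] by auto
  then show ?thesis
    using centralizer_carrier N_upper_toeplitz_iff_centralizer[OF assms(2)] by blast
qed

end
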